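(* Assume (H1), (H3) and (H6). Let $c=(c(n))_{n\in\mathbb{Z}}$ be defined by \[ c(n)=\sum_{k=-\infty}^{+\infty}\mathcal{G}(n,k)\,h(k),\qquad n\in\mathbb{Z}. \] Then $c$ is the unique almost periodic solution of the linear inhomogeneous difference system \[ c(n+1)=H(n)c(n)+h(n),\qquad n\in\mathbb{Z}. \] Moreover, \[ |c|_{\infty}\le \frac{2K}{1-\rho}\,|h|_{\infty}. \]
   Context: Let $q\in\mathbb{N}$. $|\cdot|$ denotes the Euclidean norm on every finite-dimensional space (for matrices, the Euclidean norm of the array of entries), and for $g:D\to E$, $|g|_\infty=\sup_{t\in D}|g(t)|$. Fix a real sequence $(t_n)_{n\in\mathbb{Z}}$ with $t_n<t_{n+1}$ and $t_n\to\pm\infty$ as $n\to\pm\infty$; put $t^{(k)}_n=t_{n+k}-t_n$. A set $E\subseteq\mathbb{R}$ (or $\subseteq\mathbb{Z}$) is relatively dense if there is $l>0$ with $E\cap[m,m+l]\neq\emptyset$ for all $m\in\mathbb{R}$. For $\mathbb{A}\in\{\mathbb{R},\mathbb{Z}\}$ and a finite-dimensional normed space $E$, a continuous $g:\mathbb{A}\to E$ is almost periodic if for every $\varepsilon>0$ the set $T(g,\varepsilon)=\{\tau\in\mathbb{A}:|g(t+\tau)-g(t)|\le\varepsilon\ \forall t\in\mathbb{A}\}$ is relatively dense. Let $A,B:\mathbb{R}\to M_q(\mathbb{C})$ and $f:\mathbb{R}\to\mathbb{C}^q$ be locally integrable. Let $X$ be a fundamental matrix of $x'=A(t)x$ and $X(t,s)=X(t)X(s)^{-1}$.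 For $n\in\mathbb{Z}$ and $t\in[t_n,t_{n+1}]$ let $\mathcal{J}_n(t)=I+\int_{t_n}^tX(t_n,u)B(u)\,du$; it is assumed throughout that $\mathcal{J}_n(t)$ is invertible for all $n\in\mathbb{Z}$, $t\in[t_n,t_{n+1}]$. Let $Z_n(t)=X(t,t_n)\mathcal{J}_n(t)$, $H(n)=Z_n(t_{n+1})$, and $h(n)=\int_{t_n}^{t_{n+1}}X(t_{n+1},u)f(u)\,du$. Hypotheses: (H1) $A$ and $B$ are almost periodic. (H2) For every $\varepsilon>0$ the set $\bigcap_{k\in\mathbb{N}}\{T\in\mathbb{Z}: |t^{(k)}_{T+n}-t^{(k)}_n|\le\varepsilon \text{ for all } n\in\mathbb{Z}\}$ is relatively dense. (H3) (H2) holds, and for every $\varepsilon>0$ the set $\{\tau\in\mathbb{R}: |f(t+\tau)-f(t)|\le\varepsilon \text{ for all } t\in\mathbb{R}\setminus\bigcup_{n\in\mathbb{Z}}(t_n-\varepsilon,t_n+\varepsilon)\}$ is relatively dense, and there is $\delta_\varepsilon>0$ such that $|f(t'+\tau')-f(t')|\le\varepsilon$ whenever $|\tau'|\le\delta_\varepsilon$ and $t',t'+\tau'$ lie in a common interval $[t_n,t_{n+1}]$. (H6) Let $\Phi$ be a fundamental matrix of $\phi(n+1)=H(n)\phi(n)$ (i.e. $\Phi(n+1)=H(n)\Phi(n)$, $\Phi(n)$ invertible). There are a projection $\Pi$ on $\mathbb{C}^q$ and constants $K>0$, $0<\rho<1$ such that $|\mathcal{G}(n,k)|\le K\rho^{|n-k|}$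 for all $n,k\in\mathbb{Z}$, where $\mathcal{G}(n,k)=\Phi(n)\Pi\Phi(k+1)^{-1}$ if $n>k$ and $\mathcal{G}(n,k)=-\Phi(n)(I-\Pi)\Phi(k+1)^{-1}$ if $n\le k$. *)

theory Defs
  imports "HOL-Analysis.Analysis"
begin

definition rel_dense_real :: "real set \<Rightarrow> bool" where
  "rel_dense_real E \<longleftrightarrow> (\<exists>l>0. \<forall>m::real. \<exists>x\<in>E. m \<le> x \<and> x \<le> m + l)"

definition rel_dense_int :: "int set \<Rightarrow> bool" where
  "rel_dense_int E \<longleftrightarrow> (\<exists>l>0. \<forall>m::real. \<exists>x\<in>E. m \<le> real_of_int x \<and> real_of_int x \<le> m + l)"

definition almost_periodic_real :: "(real \<Rightarrow> 'a::real_normed_vector) \<Rightarrow> bool" where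
  "almost_periodic_real g \<longleftrightarrow> continuous_on UNIV g \<and>
     (\<forall>\<epsilon>>0. rel_dense_real {\<tau>. \<forall>t. norm (g (t + \<tau>) - g t) \<le> \<epsilon>})"

text \<open>On the integers every function is continuous.\<close>
definition almost_periodic_int :: "(int \<Rightarrow> 'a::real_normed_vector) \<Rightarrow> bool" where
  "almost_periodic_int g \<longleftrightarrow>
     (\<forall>\<epsilon>>0. rel_dense_int {\<tau>. \<forall>n. norm (g (n + \<tau>) - g n) \<le> \<epsilon>})"

definition tk :: "(int \<Rightarrow> real) \<Rightarrow> nat \<Rightarrow> int \<Rightarrow> real" where
  "tk tt k n = tt (n + int k) - tt n"

definition H2 :: "(int \<Rightarrow> real) \<Rightarrow> bool" where
  "H2 tt \<longleftrightarrow> (\<forall>\<epsilon>>0. rel_dense_int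
      (\<Inter>k\<in>{k::nat. k \<ge> 1}. {T. \<forall>n. \<bar>tk tt k (T + n) - tk tt k n\<bar> \<le> \<epsilon>}))"

definition H3 :: "(int \<Rightarrow> real) \<Rightarrow> (real \<Rightarrow> 'a::real_normed_vector) \<Rightarrow> bool" where
  "H3 tt f \<longleftrightarrow> H2 tt \<and>
     (\<forall>\<epsilon>>0.
        rel_dense_real {\<tau>. \<forall>t. t \<notin> (\<Union>n. {tt n - \<epsilon> <..< tt n + \<epsilon>}) \<longrightarrow>
                                   norm (f (t + \<tau>) - f t) \<le> \<epsilon>}
      \<and> (\<exists>\<delta>>0. \<forall>t' \<tau>' n. \<bar>\<tau>'\<bar> \<le> \<delta> \<and> t' \<in> {tt n..tt (n+1)} \<and> t' + \<tau>' \<in> {tt n..tt (n+1)}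
                 \<longrightarrow> norm (f (t' + \<tau>') - f t') \<le> \<epsilon>))"

text \<open>Fundamental matrix of x' = A(t) x in the Caratheodory (integral) sense.\<close>
definition fundamental_matrix ::
  "(real \<Rightarrow> complex^'q^'q) \<Rightarrow> (real \<Rightarrow> complex^'q^'q) \<Rightarrow> bool" where
  "fundamental_matrix A X \<longleftrightarrow> (\<forall>t. invertible (X t)) \<and>
     (\<forall>s t. s \<le> t \<longrightarrow> ((\<lambda>u. A u ** X u) has_integral (X t - X s)) {s..t})"

definition Xts :: "(real \<Rightarrow> complex^'q^'q) \<Rightarrow> real \<Rightarrow> real \<Rightarrow> complex^'q^'q" where
  "Xts X t s = X t ** matrix_inv (X s)"

definition Jmat :: "(real \<Rightarrow> complex^'q^'q) \<Rightarrow> (real \<Rightarrow> complex^'q^'q) \<Rightarrow> (int \<Rightarrow> real)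
     \<Rightarrow> int \<Rightarrow> real \<Rightarrow> complex^'q^'q" where
  "Jmat X B tt n t = mat 1 + integral {tt n..t} (\<lambda>u. Xts X (tt n) u ** B u)"

definition Zmat :: "(real \<Rightarrow> complex^'q^'q) \<Rightarrow> (real \<Rightarrow> complex^'q^'q) \<Rightarrow> (int \<Rightarrow> real)
     \<Rightarrow> int \<Rightarrow> real \<Rightarrow> complex^'q^'q" where
  "Zmat X B tt n t = Xts X t (tt n) ** Jmat X B tt n t"

definition Hmat :: "(real \<Rightarrow> complex^'q^'q) \<Rightarrow> (real \<Rightarrow> complex^'q^'q) \<Rightarrow> (int \<Rightarrow> real)
     \<Rightarrow> int \<Rightarrow> complex^'q^'q" where
  "Hmat X B tt n = Zmat X B tt n (tt (n + 1))"

definition hvec :: "(real \<Rightarrow> complex^'q^'q) \<Rightarrow> (real \<Rightarrow> complex^'q) \<Rightarrow> (int \<Rightarrow> real)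
     \<Rightarrow> int \<Rightarrow> complex^'q" where
  "hvec X f tt n = integral {tt n..tt (n + 1)} (\<lambda>u. Xts X (tt (n + 1)) u *v f u)"

definition Gmat :: "(int \<Rightarrow> complex^'q^'q) \<Rightarrow> complex^'q^'q \<Rightarrow> int \<Rightarrow> int \<Rightarrow> complex^'q^'q" where
  "Gmat Phi P n k =
     (if n > k then Phi n ** P ** matrix_inv (Phi (k + 1))
      else - (Phi n ** (mat 1 - P) ** matrix_inv (Phi (k + 1))))"

end

theory Submission
  imports Defs
begin

text \<open>
  The geometric decay of the Green function G makes the series for c converge, gives the bound
  2K/(1 - \<rho>) times sup |h|, and forces every bounded solution of the homogeneous system to vanish, whence
  uniqueness. For almost periodicity: (H3) makes f almost periodic, being piecewise uniformly continuous with
  almost periods away from the impulse times. Shifting the impulse times by a common almost period (H2) and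
  A, B, f by the corresponding real shift changes H(n) and h(n) only slightly, by Gronwall estimates for the
  transition matrix; so the translates of (H, h) admit finite nets, which is Bochner's criterion on the
  integers, and the difference between c and a translate solves the system with a small forcing.
\<close>

section \<open>Frobenius norm of matrices\<close>

lemma norm_vec_power2_eq_sum: "(norm (x::'a::real_normed_vector^'n))^2 = (\<Sum>i\<in>UNIV. (norm (x$i))^2)"
  unfolding norm_vec_def L2_set_def by (simp add: sum_nonneg)

lemma norm_sum_mult_le_norm_vec:
  "norm (\<Sum>j\<in>UNIV. (a j::'a::real_normed_field) * b j) \<le> norm (vec_lambda a) * norm (vec_lambda b)"
proof -
  have "norm (\<Sum>j\<in>UNIV. a j * b j) \<le> (\<Sum>j\<in>UNIV. \<bar>norm (a j)\<bar> * \<bar>norm (b j)\<bar>)"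
    using norm_sum[of "\<lambda>j. a j * b j" UNIV] by (simp add: norm_mult)
  also have "\<dots> \<le> L2_set (\<lambda>j. norm (a j)) UNIV * L2_set (\<lambda>j. norm (b j)) UNIV"
    by (rule L2_set_mult_ineq)
  finally show ?thesis by (simp add: norm_vec_def)
qed

lemma norm_matrix_vector_mult_le: "norm ((A::'a::real_normed_field^'n^'m) *v x) \<le> norm A * norm x"
proof -
  have row: "norm ((A *v x) $ i) \<le> norm (A$i) * norm x" for i
    using norm_sum_mult_le_norm_vec[of "\<lambda>j. A$i$j" "\<lambda>j. x$j"] by (simp add: matrix_vector_mult_def)
  have "(norm (A *v x))^2 = (\<Sum>i\<in>UNIV. (norm ((A *v x)$i))^2)" by (rule norm_vec_power2_eq_sum)
  also have "\<dots> \<le> (\<Sum>i\<in>UNIV. (norm (A$i) * norm x)^2)"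
    by (intro sum_mono power_mono row) simp
  also have "\<dots> = (norm A * norm x)^2"
    by (simp add: norm_vec_power2_eq_sum[of A] power_mult_distrib sum_distrib_right)
  finally show ?thesis by (rule power2_le_imp_le) simp
qed

lemma norm_transpose: "norm (transpose (A::'a::real_normed_vector^'n^'m)) = norm A"
proof -
  have "(norm (transpose A))^2 = (norm A)^2"
    apply (simp add: norm_vec_power2_eq_sum[of "transpose A"] norm_vec_power2_eq_sum[of A]
        norm_vec_power2_eq_sum[of "transpose A $ _"] norm_vec_power2_eq_sum[of "A $ _"])
    apply (simp add: transpose_def)
    by (rule sum.swap)
  then show ?thesis by (simp add: power2_eq_iff_nonneg)
qed

lemma norm_matrix_mult_le: "norm ((A::'a::real_normed_field^'n^'m) ** B) \<le> norm A * norm (B::'a^'k^'n)"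
proof -
  have row: "norm ((A ** B) $ i) \<le> norm B * norm (A$i)" for i
  proof -
    have "(A ** B) $ i = transpose B *v (A $ i)"
      by (simp add: matrix_matrix_mult_def matrix_vector_mult_def transpose_def vec_eq_iff mult.commute)
    then show ?thesis using norm_matrix_vector_mult_le[of "transpose B" "A $ i"] by (simp add: norm_transpose)
  qed
  have "(norm (A ** B))^2 = (\<Sum>i\<in>UNIV. (norm ((A ** B)$i))^2)" by (rule norm_vec_power2_eq_sum)
  also have "\<dots> \<le> (\<Sum>i\<in>UNIV. (norm B * norm (A$i))^2)"
    by (intro sum_mono power_mono row) simp
  also have "\<dots> = (norm A * norm B)^2"
    by (simp add: norm_vec_power2_eq_sum[of A] power_mult_distrib sum_distrib_left mult.commute)
  finally show ?thesis by (rule power2_le_imp_le) simp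
qed

lemma bounded_bilinear_matrix_mult:
  "bounded_bilinear ((**) :: 'a::real_normed_field^'n^'m \<Rightarrow> 'a^'k^'n \<Rightarrow> _)"
  apply (rule bounded_bilinear.intro)
      apply (simp add: matrix_matrix_mult_def vec_eq_iff distrib_right sum.distrib)
     apply (simp add: matrix_add_ldistrib)
    apply (simp add: matrix_matrix_mult_def vec_eq_iff scaleR_sum_right)
   apply (simp add: matrix_matrix_mult_def vec_eq_iff scaleR_sum_right)
  by (rule exI[of _ 1]) (simp add: norm_matrix_mult_le)

lemma bounded_bilinear_matrix_vector_mult:
  "bounded_bilinear ((*v) :: 'a::real_normed_field^'n^'m \<Rightarrow> 'a^'n \<Rightarrow> _)"
  apply (rule bounded_bilinear.intro)
      apply (simp add: matrix_vector_mult_def vec_eq_iff distrib_right sum.distrib)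
     apply (simp add: matrix_vector_mult_def vec_eq_iff distrib_left sum.distrib)
    apply (simp add: matrix_vector_mult_def vec_eq_iff scaleR_sum_right)
   apply (simp add: matrix_vector_mult_def vec_eq_iff scaleR_sum_right)
  by (rule exI[of _ 1]) (simp add: norm_matrix_vector_mult_le)

lemma norm_mat_1: "norm (mat 1 :: 'a::real_normed_field^'n^'n) = sqrt (CARD('n))"
proof -
  have "(norm ((mat 1 :: 'a^'n^'n) $ i))^2 = 1" for i
    unfolding norm_vec_power2_eq_sum[of "(mat 1 :: 'a^'n^'n) $ i"]
    by (simp add: mat_def if_distrib[of "\<lambda>x. (norm x)^2"] cong: if_cong)
  then have "(norm (mat 1 :: 'a^'n^'n))^2 = CARD('n)"
    unfolding norm_vec_power2_eq_sum[of "mat 1 :: 'a^'n^'n"] by simp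
  then show ?thesis by (metis norm_ge_zero real_sqrt_unique)
qed

lemma invertible_matrix_inv:
  assumes "invertible (A::'a::semiring_1^'n^'m)"
  shows "A ** matrix_inv A = mat 1" "matrix_inv A ** A = mat 1"
  using someI_ex[OF assms[unfolded invertible_def]] unfolding matrix_inv_def by auto

lemma norm_matrix_mult_diff_le:
  fixes U U' :: "'a::real_normed_field^'n^'m" and J J' :: "'a^'k^'n"
  shows "norm (U ** J - U' ** J') \<le> norm (U - U') * norm J + norm U' * norm (J - J')"
proof -
  have "U ** J - U' ** J' = (U - U') ** J + U' ** (J - J')"
    by (simp add: bounded_bilinear.diff_left[OF bounded_bilinear_matrix_mult]
        bounded_bilinear.diff_right[OF bounded_bilinear_matrix_mult])
  then show ?thesis by (metis norm_triangle_le add_mono norm_matrix_mult_le)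
qed

lemma norm_matrix_vector_mult_diff_le:
  fixes U U' :: "'a::real_normed_field^'n^'m" and J J' :: "'a^'n"
  shows "norm (U *v J - U' *v J') \<le> norm (U - U') * norm J + norm U' * norm (J - J')"
proof -
  have "U *v J - U' *v J' = (U - U') *v J + U' *v (J - J')"
    by (simp add: bounded_bilinear.diff_left[OF bounded_bilinear_matrix_vector_mult]
        bounded_bilinear.diff_right[OF bounded_bilinear_matrix_vector_mult])
  then show ?thesis by (metis norm_triangle_le add_mono norm_matrix_vector_mult_le)
qed

lemma continuous_on_matrix_mult [continuous_intros]:
  fixes f :: "'b::topological_space \<Rightarrow> 'a::real_normed_field^'n^'m" and g :: "'b \<Rightarrow> 'a^'k^'n"
  shows "continuous_on S f \<Longrightarrow> continuous_on S g \<Longrightarrow> continuous_on S (\<lambda>x. f x ** g x)"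
  by (rule bounded_bilinear.continuous_on[OF bounded_bilinear_matrix_mult])

lemma continuous_on_matrix_vector_mult [continuous_intros]:
  fixes f :: "'b::topological_space \<Rightarrow> 'a::real_normed_field^'n^'m" and g :: "'b \<Rightarrow> 'a^'n"
  shows "continuous_on S f \<Longrightarrow> continuous_on S g \<Longrightarrow> continuous_on S (\<lambda>x. f x *v g x)"
  by (rule bounded_bilinear.continuous_on[OF bounded_bilinear_matrix_vector_mult])

section \<open>Gronwall estimates and integrals over intervals\<close>

lemma gronwall_forward:
  fixes \<phi> :: "real \<Rightarrow> real"
  assumes cont: "continuous_on {a..b} \<phi>" and bpos: "\<beta> > 0"
    and le: "\<And>x. x \<in> {a..b} \<Longrightarrow> \<phi> x \<le> \<alpha> + \<beta> * integral {a..x} \<phi>"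
    and x: "x \<in> {a..b}"
  shows "\<phi> x \<le> \<alpha> * exp (\<beta> * (x - a))"
proof -
  define R where "R u = integral {a..u} \<phi>" for u
  \<comment> \<open>The hypothesis says exactly that g is decreasing.\<close>
  define g where "g u = exp (- \<beta> * (u - a)) * (R u + \<alpha> / \<beta>)" for u
  define g' where "g' u = exp (- \<beta> * (u - a)) * (\<phi> u - \<beta> * R u - \<alpha>)" for u
  have dR: "(R has_real_derivative \<phi> u) (at u within {a..b})" if "u \<in> {a..b}" for u
    unfolding R_def has_real_derivative_iff_has_vector_derivative
    by (rule integral_has_vector_derivative[OF cont that])
  have dg: "(g has_real_derivative g' u) (at u within {a..b})" if "u \<in> {a..b}" for u
    unfolding g_def g'_def using bpos
    by (auto intro!: derivative_eq_intros dR[OF that] simp: field_simps)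
  have axb: "{a..x} \<subseteq> {a..b}" using x by auto
  have ftc: "(g' has_integral (g x - g a)) {a..x}"
  proof (rule fundamental_theorem_of_calculus)
    show "a \<le> x" using x by simp
    show "(g has_vector_derivative g' u) (at u within {a..x})" if "u \<in> {a..x}" for u
      using DERIV_subset[OF dg axb] that axb
      by (auto simp: has_real_derivative_iff_has_vector_derivative[symmetric])
  qed
  have "g' u \<le> 0" if "u \<in> {a..x}" for u
    using le[of u] axb that unfolding g'_def R_def
    by (simp add: mult_nonpos_nonneg mult_le_0_iff)
  then have "g x - g a \<le> 0"
    using has_integral_le[OF ftc has_integral_0[of "{a..x}"]] by auto
  moreover have "R a = 0" unfolding R_def by simp
  ultimately have "exp (- \<beta> * (x - a)) * (R x + \<alpha> / \<beta>) \<le> \<alpha> / \<beta>" unfolding g_def by simp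
  moreover have "R x + \<alpha> / \<beta> = exp (\<beta> * (x - a)) * (exp (- \<beta> * (x - a)) * (R x + \<alpha> / \<beta>))"
    by (simp add: mult.assoc[symmetric] exp_add[symmetric])
  ultimately have "R x + \<alpha> / \<beta> \<le> exp (\<beta> * (x - a)) * (\<alpha> / \<beta>)"
    by (metis exp_ge_zero mult_left_mono)
  then have "\<beta> * (R x + \<alpha> / \<beta>) \<le> \<beta> * (exp (\<beta> * (x - a)) * (\<alpha> / \<beta>))"
    using bpos by (intro mult_left_mono) auto
  then have "\<beta> * R x + \<alpha> \<le> \<alpha> * exp (\<beta> * (x - a))"
    using bpos by (simp add: distrib_left mult.commute)
  then show ?thesis using le[OF x] unfolding R_def by simp
qed

lemma gronwall_backward:
  fixes \<phi> :: "real \<Rightarrow> real"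
  assumes cont: "continuous_on {a..b} \<phi>" and bpos: "\<beta> > 0"
    and le: "\<And>x. x \<in> {a..b} \<Longrightarrow> \<phi> x \<le> \<alpha> + \<beta> * integral {x..b} \<phi>"
    and x: "x \<in> {a..b}"
  shows "\<phi> x \<le> \<alpha> * exp (\<beta> * (b - x))"
proof -
  define \<psi> where "\<psi> s = \<phi> (- s)" for s
  have c: "continuous_on {-b..-a} \<psi>" unfolding \<psi>_def
    by (rule continuous_on_compose2[OF cont]) (auto intro!: continuous_intros)
  have "\<psi> (-x) \<le> \<alpha> * exp (\<beta> * (-x - -b))"
  proof (rule gronwall_forward[OF c bpos])
    fix s assume s: "s \<in> {-b..-a}"
    have "integral {-b..s} \<psi> = integral {-s..b} \<phi>"
      unfolding \<psi>_def using Henstock_Kurzweil_Integration.integral_reflect_real[of b "-s" \<phi>] by simp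
    then show "\<psi> s \<le> \<alpha> + \<beta> * integral {-b..s} \<psi>" using le[of "-s"] s unfolding \<psi>_def by auto
  qed (use x in auto)
  then show ?thesis unfolding \<psi>_def by simp
qed

lemma integral_affine:
  fixes \<phi> :: "real \<Rightarrow> real"
  assumes "continuous_on {y..u} \<phi>" "y \<le> u"
  shows "integral {y..u} (\<lambda>v. a + \<beta> * \<phi> v) = a * (u - y) + \<beta> * integral {y..u} \<phi>"
proof -
  have i: "\<phi> integrable_on {y..u}" using assms integrable_continuous_real by blast
  have "integral {y..u} (\<lambda>v. a + \<beta> * \<phi> v) = integral {y..u} (\<lambda>v. a) + integral {y..u} (\<lambda>v. \<beta> * \<phi> v)"
    by (rule Henstock_Kurzweil_Integration.integral_add) (auto intro!: integrable_continuous_real continuous_intros assms(1))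
  also have "\<dots> = a * (u - y) + \<beta> * integral {y..u} \<phi>" using assms(2) by (simp add: mult.commute)
  finally show ?thesis .
qed

lemma gronwall_integral_equation_forward:
  fixes F g :: "real \<Rightarrow> 'a::banach"
  assumes cF: "continuous_on {y..y+L} F" and cg: "continuous_on {y..y+L} g" and b: "\<beta> > 0" and a: "a \<ge> 0"
    and eq: "\<And>u. u \<in> {y..y+L} \<Longrightarrow> F u = F0 + integral {y..u} g"
    and gb: "\<And>v. v \<in> {y..y+L} \<Longrightarrow> norm (g v) \<le> a + \<beta> * norm (F v)"
    and u: "u \<in> {y..y+L}"
  shows "norm (F u) \<le> (norm F0 + a * L) * exp (\<beta> * L)"
proof -
  define \<phi> where "\<phi> v = norm (F v)" for v
  have c\<phi>: "continuous_on {y..y+L} \<phi>" unfolding \<phi>_def by (intro continuous_intros cF)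
  have le: "\<phi> w \<le> (norm F0 + a * L) + \<beta> * integral {y..w} \<phi>" if w: "w \<in> {y..y+L}" for w
  proof -
    have sub: "{y..w} \<subseteq> {y..y+L}" using w by auto
    have ig: "g integrable_on {y..w}" by (rule integrable_continuous_real) (use cg sub continuous_on_subset in blast)
    have c\<phi>w: "continuous_on {y..w} \<phi>" using c\<phi> sub continuous_on_subset by blast
    have i2: "(\<lambda>v. a + \<beta> * \<phi> v) integrable_on {y..w}"
      by (rule integrable_continuous_real) (intro continuous_intros c\<phi>w)
    have "\<phi> w \<le> norm F0 + norm (integral {y..w} g)" unfolding \<phi>_def eq[OF w] by (rule norm_triangle_ineq)
    also have "norm (integral {y..w} g) \<le> integral {y..w} (\<lambda>v. a + \<beta> * \<phi> v)"
      by (rule integral_norm_bound_integral[OF ig i2]) (use gb sub in \<open>auto simp: \<phi>_def\<close>)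
    also have "\<dots> = a * (w - y) + \<beta> * integral {y..w} \<phi>" using w by (intro integral_affine c\<phi>w) auto
    also have "a * (w - y) \<le> a * L" using w a by (intro mult_left_mono) auto
    finally show ?thesis by linarith
  qed
  have "\<phi> u \<le> (norm F0 + a * L) * exp (\<beta> * (u - y))"
    by (rule gronwall_forward[OF c\<phi> b le u])
  also have "\<dots> \<le> (norm F0 + a * L) * exp (\<beta> * L)"
    using u b a by (intro mult_left_mono) (auto intro!: mult_left_mono simp: add_nonneg_nonneg)
  finally show ?thesis unfolding \<phi>_def .
qed

lemma gronwall_integral_equation_backward:
  fixes F g :: "real \<Rightarrow> 'a::banach"
  assumes cF: "continuous_on {y-L..y} F" and cg: "continuous_on {y-L..y} g" and b: "\<beta> > 0" and a: "a \<ge> 0"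
    and eq: "\<And>u. u \<in> {y-L..y} \<Longrightarrow> F u = F0 - integral {u..y} g"
    and gb: "\<And>v. v \<in> {y-L..y} \<Longrightarrow> norm (g v) \<le> a + \<beta> * norm (F v)"
    and u: "u \<in> {y-L..y}"
  shows "norm (F u) \<le> (norm F0 + a * L) * exp (\<beta> * L)"
proof -
  define \<phi> where "\<phi> v = norm (F v)" for v
  have c\<phi>: "continuous_on {y-L..y} \<phi>" unfolding \<phi>_def by (intro continuous_intros cF)
  have le: "\<phi> w \<le> (norm F0 + a * L) + \<beta> * integral {w..y} \<phi>" if w: "w \<in> {y-L..y}" for w
  proof -
    have sub: "{w..y} \<subseteq> {y-L..y}" using w by auto
    have ig: "g integrable_on {w..y}" by (rule integrable_continuous_real) (use cg sub continuous_on_subset in blast)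
    have c\<phi>w: "continuous_on {w..y} \<phi>" using c\<phi> sub continuous_on_subset by blast
    have i2: "(\<lambda>v. a + \<beta> * \<phi> v) integrable_on {w..y}"
      by (rule integrable_continuous_real) (intro continuous_intros c\<phi>w)
    have "\<phi> w \<le> norm F0 + norm (integral {w..y} g)" unfolding \<phi>_def eq[OF w] by (rule norm_triangle_ineq4)
    also have "norm (integral {w..y} g) \<le> integral {w..y} (\<lambda>v. a + \<beta> * \<phi> v)"
      by (rule integral_norm_bound_integral[OF ig i2]) (use gb sub in \<open>auto simp: \<phi>_def\<close>)
    also have "\<dots> = a * (y - w) + \<beta> * integral {w..y} \<phi>" using w by (intro integral_affine c\<phi>w) auto
    also have "a * (y - w) \<le> a * L" using w a by (intro mult_left_mono) auto
    finally show ?thesis by linarith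
  qed
  have "\<phi> u \<le> (norm F0 + a * L) * exp (\<beta> * (y - u))"
    by (rule gronwall_backward[OF c\<phi> b le u])
  also have "\<dots> \<le> (norm F0 + a * L) * exp (\<beta> * L)"
    using u b a by (intro mult_left_mono) (auto intro!: mult_left_mono simp: add_nonneg_nonneg)
  finally show ?thesis unfolding \<phi>_def .
qed

lemma integral_translate:
  fixes h :: "real \<Rightarrow> 'a::real_normed_vector"
  shows "integral {y..u} (\<lambda>v. h (v + c)) = integral {y + c..u + c} h"
  using integral_shift_real_ivl[of "y + c" c "u + c" h] by simp

lemma norm_integral_le_length:
  fixes g :: "real \<Rightarrow> 'a::banach"
  assumes c: "continuous_on {a..b} g" and b: "\<And>v. v \<in> {a..b} \<Longrightarrow> norm (g v) \<le> K" and ab: "a \<le> b"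
  shows "norm (integral {a..b} g) \<le> K * (b - a)"
proof -
  have "norm (g a) \<le> K" using b[of a] ab by simp
  then have K: "0 \<le> K" using norm_ge_zero order.trans by blast
  have hi: "(g has_integral integral {a..b} g) (cbox a b)"
    using integrable_continuous_real[OF c] by (simp add: has_integral_integral)
  have bb: "\<And>x. x \<in> cbox a b \<Longrightarrow> norm (g x) \<le> K" using b by simp
  from has_integral_bound[OF K hi bb] ab show ?thesis by simp
qed

lemma norm_integral_diff_upper_le:
  fixes g :: "real \<Rightarrow> 'a::banach"
  assumes c: "continuous_on {a..a+Lm} g" and b: "\<And>v. v \<in> {a..a+Lm} \<Longrightarrow> norm (g v) \<le> K"
    and L: "0 \<le> L" "L \<le> Lm" "0 \<le> L'" "L' \<le> Lm"
  shows "norm (integral {a..a+L} g - integral {a..a+L'} g) \<le> K * \<bar>L - L'\<bar>"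
proof -
  have main: "norm (integral {a..a+L2} g - integral {a..a+L1} g) \<le> K * (L2 - L1)"
    if l: "0 \<le> L1" "L1 \<le> L2" "L2 \<le> Lm" for L1 L2
  proof -
    have sub: "{a..a+L2} \<subseteq> {a..a+Lm}" using l by auto
    have i: "g integrable_on {a..a+L2}"
      by (rule integrable_continuous_real) (use c sub continuous_on_subset in blast)
    have "integral {a..a+L1} g + integral {a+L1..a+L2} g = integral {a..a+L2} g"
      by (rule Henstock_Kurzweil_Integration.integral_combine) (use l i in auto)
    then have "integral {a..a+L2} g - integral {a..a+L1} g = integral {a+L1..a+L2} g" by (simp add: algebra_simps)
    also have "norm \<dots> \<le> K * ((a + L2) - (a + L1))"
      by (rule norm_integral_le_length) (use c l continuous_on_subset b in \<open>auto intro: continuous_on_subset[OF c]\<close>)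
    finally show ?thesis by simp
  qed
  show ?thesis
  proof (cases "L \<le> L'")
    case True then show ?thesis using main[of L L'] L by (simp add: norm_minus_commute)
  next
    case False then show ?thesis using main[of L' L] L by simp
  qed
qed

lemma norm_integral_diff_le:
  fixes k1 k2 :: "real \<Rightarrow> 'a::banach"
  assumes c1: "continuous_on {a..a+L} k1" and c2: "continuous_on {a..a+Lm} k2"
    and diff: "\<And>v. v \<in> {a..a+L} \<Longrightarrow> norm (k1 v - k2 v) \<le> \<kappa>"
    and bound: "\<And>v. v \<in> {a..a+Lm} \<Longrightarrow> norm (k2 v) \<le> M"
    and L: "0 \<le> L" "L \<le> Lm" "0 \<le> L'" "L' \<le> Lm"
  shows "norm (integral {a..a+L} k1 - integral {a..a+L'} k2) \<le> \<kappa> * L + M * \<bar>L - L'\<bar>"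
proof -
  have c2': "continuous_on {a..a+L} k2" using L by (intro continuous_on_subset[OF c2]) auto
  have "integral {a..a+L} k1 - integral {a..a+L'} k2
      = integral {a..a+L} (\<lambda>v. k1 v - k2 v) + (integral {a..a+L} k2 - integral {a..a+L'} k2)"
    using c1 c2' by (simp add: Henstock_Kurzweil_Integration.integral_diff integrable_continuous_real)
  also have "norm \<dots> \<le> \<kappa> * L + M * \<bar>L - L'\<bar>"
  proof (rule norm_triangle_le[OF add_mono])
    have "norm (integral {a..a+L} (\<lambda>v. k1 v - k2 v)) \<le> \<kappa> * ((a + L) - a)"
      by (rule norm_integral_le_length[OF continuous_on_diff[OF c1 c2'] diff]) (use L in simp_all)
    then show "norm (integral {a..a+L} (\<lambda>v. k1 v - k2 v)) \<le> \<kappa> * L" by simp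
    show "norm (integral {a..a+L} k2 - integral {a..a+L'} k2) \<le> M * \<bar>L - L'\<bar>"
      by (rule norm_integral_diff_upper_le[OF c2 bound L])
  qed
  finally show ?thesis .
qed

section \<open>Almost periodic functions\<close>

lemma norm_diff_triangle: "norm ((a::'a::real_normed_vector) - c) \<le> norm (a - b) + norm (b - c)"
  using norm_triangle_ineq[of "a - b" "b - c"] by simp

lemma norm_diff_le_via_centre:
  fixes a b y :: "'a::real_normed_vector"
  assumes "norm (a - y) \<le> e / 2" "norm (b - y) \<le> e / 2"
  shows "norm (a - b) \<le> e"
  using norm_diff_triangle[of a b y] assms norm_minus_commute[of b y] by linarith

lemma almost_periodic_real_continuous: "almost_periodic_real g \<Longrightarrow> continuous_on UNIV g"
  unfolding almost_periodic_real_def by simp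

lemma almost_periodic_real_periods:
  assumes "almost_periodic_real g" "e > 0"
  obtains l where "l > 0" "\<And>m. \<exists>\<tau>. m \<le> \<tau> \<and> \<tau> \<le> m + l \<and> (\<forall>t. norm (g (t + \<tau>) - g t) \<le> e)"
  using assms unfolding almost_periodic_real_def rel_dense_real_def by fastforce

lemma almost_periodic_real_bounded:
  fixes g :: "real \<Rightarrow> 'a::real_normed_vector"
  assumes ap: "almost_periodic_real g"
  obtains M where "\<And>t. norm (g t) \<le> M"
proof -
  obtain l where l: "l > 0" "\<And>m. \<exists>\<tau>. m \<le> \<tau> \<and> \<tau> \<le> m + l \<and> (\<forall>t. norm (g (t + \<tau>) - g t) \<le> 1)"
    using almost_periodic_real_periods[OF ap, of 1] by auto
  have "compact (g ` {0..l})"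
    by (rule compact_continuous_image) (use almost_periodic_real_continuous[OF ap] continuous_on_subset in auto)
  then obtain M0 where M0: "\<And>x. x \<in> {0..l} \<Longrightarrow> norm (g x) \<le> M0"
    by (meson bounded_iff compact_imp_bounded image_eqI)
  have "norm (g t) \<le> M0 + 1" for t
  proof -
    obtain \<tau> where \<tau>: "-t \<le> \<tau>" "\<tau> \<le> -t + l" "\<forall>s. norm (g (s + \<tau>) - g s) \<le> 1" using l(2) by blast
    have "norm (g t) \<le> norm (g (t + \<tau>)) + norm (g (t + \<tau>) - g t)" by (metis norm_triangle_sub norm_minus_commute)
    also have "\<dots> \<le> M0 + 1" using M0[of "t + \<tau>"] \<tau> by (intro add_mono) auto
    finally show ?thesis .
  qed
  then show ?thesis using that by blast
qed

lemma almost_periodic_real_uniformly_continuous: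
  fixes g :: "real \<Rightarrow> 'a::real_normed_vector"
  assumes ap: "almost_periodic_real g" and e: "e > 0"
  obtains d where "d > 0" "\<And>x y. \<bar>x - y\<bar> \<le> d \<Longrightarrow> norm (g x - g y) \<le> e"
proof -
  obtain l where l: "l > 0" "\<And>m. \<exists>\<tau>. m \<le> \<tau> \<and> \<tau> \<le> m + l \<and> (\<forall>t. norm (g (t + \<tau>) - g t) \<le> e/3)"
    using almost_periodic_real_periods[OF ap, of "e/3"] e by auto
  have "uniformly_continuous_on {-1..l+1} g"
    by (rule compact_uniformly_continuous) (use almost_periodic_real_continuous[OF ap] continuous_on_subset in auto)
  then obtain d0 where d0: "d0 > 0" "\<And>x x'. x \<in> {-1..l+1} \<Longrightarrow> x' \<in> {-1..l+1} \<Longrightarrow> dist x' x < d0 \<Longrightarrow> dist (g x') (g x) < e/3"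
    unfolding uniformly_continuous_on_def using e by (metis divide_pos_pos zero_less_numeral)
  define d where "d = min (d0/2) 1"
  have "d > 0" using d0 by (simp add: d_def)
  moreover have "norm (g x - g y) \<le> e" if "\<bar>x - y\<bar> \<le> d" for x y
  proof -
    obtain \<tau> where \<tau>: "-x \<le> \<tau>" "\<tau> \<le> -x + l" "\<forall>s. norm (g (s + \<tau>) - g s) \<le> e/3" using l(2) by blast
    have xy: "\<bar>x - y\<bar> < d0" "\<bar>x - y\<bar> \<le> 1" using that d0 unfolding d_def by auto
    have "dist (g (y + \<tau>)) (g (x + \<tau>)) < e/3"
      apply (rule d0(2)) using \<tau> xy unfolding dist_real_def by (auto simp: abs_minus_commute abs_le_iff)
    then have a: "norm (g (x + \<tau>) - g (y + \<tau>)) \<le> e/3" by (simp add: dist_norm norm_minus_commute)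
    have "norm (g x - g y) \<le> norm (g x - g (x + \<tau>)) + norm (g (x + \<tau>) - g (y + \<tau>)) + norm (g (y + \<tau>) - g y)"
      by (meson norm_diff_triangle add_mono order_refl order.trans)
    also have "\<dots> \<le> e/3 + e/3 + e/3" using \<tau>(3) a by (intro add_mono) (auto simp: norm_minus_commute)
    finally show ?thesis by simp
  qed
  ultimately show ?thesis using that by blast
qed

lemma almost_periodic_real_translates_finite_net:
  fixes g :: "real \<Rightarrow> 'a::real_normed_vector"
  assumes ap: "almost_periodic_real g" and e: "e > 0"
  obtains F where "finite F" "\<And>r. \<exists>j\<in>F. \<forall>s. norm (g (s + r) - g (s + j)) \<le> e"
proof -
  obtain d where d: "d > 0" "\<And>x y. \<bar>x - y\<bar> \<le> d \<Longrightarrow> norm (g x - g y) \<le> e/2"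
    using almost_periodic_real_uniformly_continuous[OF ap, of "e/2"] e by auto
  obtain l where l: "l > 0" "\<And>m. \<exists>\<tau>. m \<le> \<tau> \<and> \<tau> \<le> m + l \<and> (\<forall>t. norm (g (t + \<tau>) - g t) \<le> e/2)"
    using almost_periodic_real_periods[OF ap, of "e/2"] e by auto
  define N where "N = nat (ceiling (l / d))"
  define F where "F = (\<lambda>k. real k * d) ` {..N}"
  have "finite F" unfolding F_def by simp
  moreover have "\<exists>j\<in>F. \<forall>s. norm (g (s + r) - g (s + j)) \<le> e" for r
  proof -
    obtain \<tau> where \<tau>: "-r \<le> \<tau>" "\<tau> \<le> -r + l" "\<forall>s. norm (g (s + \<tau>) - g s) \<le> e/2" using l(2) by blast
    define k where "k = nat (floor ((r + \<tau>) / d))"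
    define z where "z = (r + \<tau>) / d"
    have z0: "z \<ge> 0" and zl: "z \<le> l / d" unfolding z_def using \<tau> d by (auto intro: divide_right_mono)
    have kz: "real k = of_int (floor z)" unfolding k_def z_def[symmetric] using z0 by simp
    have rt: "r + \<tau> = z * d" unfolding z_def using d by simp
    have k1: "real k * d \<le> r + \<tau>" unfolding kz rt using d by (intro mult_right_mono) auto
    have k2: "r + \<tau> \<le> real k * d + d" unfolding kz rt using d
      by (metis distrib_right less_eq_real_def mult_1 mult_right_mono real_of_int_floor_add_one_ge)
    have "floor z \<le> ceiling (l / d)" using zl by (meson floor_le_ceiling ceiling_mono order_trans)
    then have "k \<le> N" unfolding k_def N_def z_def[symmetric] by (simp add: nat_mono)
    then have kF: "real k * d \<in> F" unfolding F_def by auto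
    have "norm (g (s + r) - g (s + real k * d)) \<le> e" for s
    proof -
      have "norm (g (s + r) - g (s + real k * d)) \<le> norm (g (s + r) - g (s + r + \<tau>)) + norm (g (s + r + \<tau>) - g (s + real k * d))"
        by (rule norm_diff_triangle)
      also have "\<dots> \<le> e/2 + e/2"
        apply (intro add_mono)
        using \<tau>(3)[rule_format, of "s + r"] apply (simp add: norm_minus_commute add.assoc)
        apply (rule d(2)) using k1 k2 by auto
      finally show ?thesis by simp
    qed
    then show ?thesis using kF by blast
  qed
  ultimately show ?thesis using that by blast
qed

lemma finite_nets_common_refinement:
  assumes "finite Y" "\<And>m. \<exists>y\<in>Y. P m y" "finite Z" "\<And>m. \<exists>y\<in>Z. Q m y"
  shows "\<exists>F. finite F \<and> (\<forall>m. \<exists>j\<in>F. \<exists>y1 y2. P m y1 \<and> P j y1 \<and> Q m y2 \<and> Q j y2)"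
proof -
  define S where "S = {p \<in> Y \<times> Z. \<exists>j. P j (fst p) \<and> Q j (snd p)}"
  define pick where "pick p = (SOME j. P j (fst p) \<and> Q j (snd p))" for p
  have "finite (pick ` S)" unfolding S_def using assms by auto
  moreover have "\<exists>j\<in>pick ` S. \<exists>y1 y2. P m y1 \<and> P j y1 \<and> Q m y2 \<and> Q j y2" for m
  proof -
    obtain y1 y2 where y: "y1 \<in> Y" "P m y1" "y2 \<in> Z" "Q m y2" using assms by blast
    then have S: "(y1, y2) \<in> S" unfolding S_def by auto
    have "P (pick (y1,y2)) y1 \<and> Q (pick (y1,y2)) y2"
      unfolding pick_def using someI_ex[of "\<lambda>j. P j y1 \<and> Q j y2"] y by auto
    then show ?thesis using S y by blast
  qed
  ultimately show ?thesis by blast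
qed

lemma rel_dense_int_from_finite_net:
  fixes g :: "int \<Rightarrow> 'a::real_normed_vector" and k :: "int \<Rightarrow> 'b::real_normed_vector"
  assumes tb: "\<And>e. e > 0 \<Longrightarrow> \<exists>F. finite F \<and> (\<forall>m. \<exists>j\<in>F. \<forall>n. norm (g (n+m) - g (n+j)) \<le> e \<and> norm (k (n+m) - k (n+j)) \<le> e)"
    and e: "e > 0"
  shows "rel_dense_int {T. \<forall>n. norm (g (n + T) - g n) \<le> e \<and> norm (k (n + T) - k n) \<le> e}"
proof -
  obtain F where F: "finite F" "\<And>m. \<exists>j\<in>F. \<forall>n. norm (g (n+m) - g (n+j)) \<le> e \<and> norm (k (n+m) - k (n+j)) \<le> e"
    using tb[OF e] by blast
  define L where "L = Max (abs ` F)"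
  have L: "\<bar>j\<bar> \<le> L" if "j \<in> F" for j unfolding L_def using F(1) that by auto
  show ?thesis unfolding rel_dense_int_def
  proof (intro exI[of _ "2 * real_of_int L + 1"] conjI allI)
    obtain j0 where "j0 \<in> F" using F(2) by blast
    then show "0 < 2 * real_of_int L + 1" using L[of j0] by linarith
  next
    fix m0 :: real
    define M where "M = ceiling m0 + L"
    obtain j where j: "j \<in> F" "\<forall>n. norm (g (n + - M) - g (n + j)) \<le> e \<and> norm (k (n + - M) - k (n + j)) \<le> e"
      using F(2)[of "-M"] by blast
    have "\<forall>n. norm (g (n + (M + j)) - g n) \<le> e \<and> norm (k (n + (M + j)) - k n) \<le> e"
    proof
      fix n
      show "norm (g (n + (M + j)) - g n) \<le> e \<and> norm (k (n + (M + j)) - k n) \<le> e"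
        using j(2)[rule_format, of "n + M"] by (simp add: norm_minus_commute add.assoc)
    qed
    moreover have "m0 \<le> real_of_int (M + j) \<and> real_of_int (M + j) \<le> m0 + (2 * real_of_int L + 1)"
      using L[OF j(1)] unfolding M_def by (smt (verit) ceiling_correct of_int_add of_int_le_iff abs_le_iff)
    ultimately show "\<exists>x\<in>{T. \<forall>n. norm (g (n + T) - g n) \<le> e \<and> norm (k (n + T) - k n) \<le> e}.
         m0 \<le> real_of_int x \<and> real_of_int x \<le> m0 + (2 * real_of_int L + 1)" by blast
  qed
qed

lemma almost_periodic_int_bounded:
  fixes g :: "int \<Rightarrow> 'a::real_normed_vector"
  assumes ap: "almost_periodic_int g"
  obtains M where "\<And>n. norm (g n) \<le> M"
proof -
  obtain l where l: "l > 0" "\<And>m::real. \<exists>x\<in>{\<tau>. \<forall>n. norm (g (n + \<tau>) - g n) \<le> 1}. m \<le> real_of_int x \<and> real_of_int x \<le> m + l"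
    using ap unfolding almost_periodic_int_def rel_dense_int_def by (meson zero_less_one)
  define M0 where "M0 = Max ((\<lambda>i. norm (g i)) ` {0..ceiling l})"
  have M0: "norm (g i) \<le> M0" if "i \<in> {0..ceiling l}" for i
    unfolding M0_def using that by (intro Max_ge) auto
  have "norm (g n) \<le> M0 + 1" for n
  proof -
    obtain \<tau> where \<tau>: "\<forall>n. norm (g (n + \<tau>) - g n) \<le> 1" "-real_of_int n \<le> real_of_int \<tau>" "real_of_int \<tau> \<le> -real_of_int n + l"
      using l(2)[of "-real_of_int n"] by auto
    have "n + \<tau> \<in> {0..ceiling l}" using \<tau>(2,3) by (auto simp: le_ceiling_iff)
    then have "norm (g (n + \<tau>)) \<le> M0" by (rule M0)
    moreover have "norm (g n) \<le> norm (g (n + \<tau>)) + norm (g (n + \<tau>) - g n)" by (metis norm_triangle_sub norm_minus_commute)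
    ultimately show ?thesis using \<tau>(1) by smt
  qed
  then show ?thesis using that by blast
qed

lemma rel_dense_real_mono:
  assumes "rel_dense_real S" "S \<subseteq> T" shows "rel_dense_real T"
  using assms unfolding rel_dense_real_def by (meson subsetD)

lemma rel_dense_int_mono:
  assumes "rel_dense_int S" "S \<subseteq> T" shows "rel_dense_int T"
  using assms unfolding rel_dense_int_def by (meson subsetD)

section \<open>Impulse times\<close>

locale impulse_times =
  fixes tt :: "int \<Rightarrow> real"
  assumes tt_mono: "\<And>n. tt n < tt (n + 1)"
    and tt_top: "filterlim tt at_top at_top"
    and tt_bot: "filterlim tt at_bot at_bot"
    and tt_H2: "H2 tt"
begin

lemma tt_less_nat: "tt m < tt (m + int (Suc k))"
proof (induction k)
  case 0 then show ?case using tt_mono[of m] by simp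
next
  case (Suc k) then show ?case using tt_mono[of "m + int (Suc k)"] by (simp add: add.assoc)
qed

lemma tt_less: "m < n \<Longrightarrow> tt m < tt n"
  using tt_less_nat[of m "nat (n - m - 1)"] by simp

lemma tt_le: "m \<le> n \<Longrightarrow> tt m \<le> tt n"
  using tt_less[of m n] by (cases "m = n") auto

lemma tt_less_iff: "tt m < tt n \<longleftrightarrow> m < n"
  using tt_less tt_le by (meson linorder_not_le)

lemma tt_le_iff: "tt m \<le> tt n \<longleftrightarrow> m \<le> n"
  using tt_less tt_le by (meson linorder_not_le)

lemma tt_exists_le: "\<exists>n. tt n \<le> x"
proof -
  have "\<forall>\<^sub>F n in at_bot. tt n \<le> x" using tt_bot by (simp add: filterlim_at_bot)
  then obtain N where "\<And>n. n \<le> N \<Longrightarrow> tt n \<le> x" unfolding eventually_at_bot_linorder by blast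
  then show ?thesis by blast
qed

lemma tt_exists_gt: "\<exists>n. x < tt n"
proof -
  have "\<forall>\<^sub>F n in at_top. x + 1 \<le> tt n" using tt_top by (simp add: filterlim_at_top)
  then obtain N where "\<And>n. n \<ge> N \<Longrightarrow> x + 1 \<le> tt n" unfolding eventually_at_top_linorder by blast
  then show ?thesis by (meson less_add_one order_less_le_trans order_refl)
qed

lemma tt_locate: "\<exists>n. tt n \<le> x \<and> x < tt (n + 1)"
proof -
  obtain n0 where n0: "tt n0 \<le> x" using tt_exists_le by blast
  obtain n1 where n1: "x < tt n1" using tt_exists_gt by blast
  define S where "S = {n. n0 \<le> n \<and> tt n \<le> x}"
  have "S \<subseteq> {n0..n1}" unfolding S_def using n1 by (auto simp: tt_le_iff[symmetric] intro: order_trans)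
  then have fin: "finite S" by (rule finite_subset) simp
  have "n0 \<in> S" unfolding S_def using n0 by simp
  define n where "n = Max S"
  have "n \<in> S" unfolding n_def using fin \<open>n0 \<in> S\<close> by (intro Max_in) auto
  moreover have "\<not> tt (n + 1) \<le> x"
  proof
    assume "tt (n + 1) \<le> x"
    then have "n + 1 \<in> S" using \<open>n \<in> S\<close> unfolding S_def by simp
    then show False using Max_ge[OF fin, of "n+1"] unfolding n_def by simp
  qed
  ultimately show ?thesis unfolding S_def by auto
qed

lemma H2_almost_periods:
  assumes "e > 0"
  obtains l where "l > 0" "\<And>m::real. \<exists>T. m \<le> real_of_int T \<and> real_of_int T \<le> m + l \<and>
      (\<forall>n. \<forall>k. \<bar>tt (T + n + k) - tt (T + n) - (tt (n + k) - tt n)\<bar> \<le> e)"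
proof -
  obtain l where l: "l > 0" "\<And>m::real. \<exists>x\<in>(\<Inter>k\<in>{k::nat. k \<ge> 1}. {T. \<forall>n. \<bar>tk tt k (T + n) - tk tt k n\<bar> \<le> e}).
      m \<le> real_of_int x \<and> real_of_int x \<le> m + l"
    using tt_H2 assms unfolding H2_def rel_dense_int_def by meson
  show ?thesis
  proof (rule that[OF l(1)])
    fix m :: real
    obtain T where T: "T \<in> (\<Inter>k\<in>{k::nat. k \<ge> 1}. {T. \<forall>n. \<bar>tk tt k (T + n) - tk tt k n\<bar> \<le> e})"
      "m \<le> real_of_int T" "real_of_int T \<le> m + l" using l(2) by blast
    have "\<bar>tt (T + n + k) - tt (T + n) - (tt (n + k) - tt n)\<bar> \<le> e" for n k
    proof (cases "k > 0")
      case True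
      then have "\<bar>tk tt (nat k) (T + n) - tk tt (nat k) n\<bar> \<le> e" using T(1) by auto
      then show ?thesis using True unfolding tk_def by simp
    next
      case False
      show ?thesis
      proof (cases "k = 0")
        case True then show ?thesis using assms by simp
      next
        case False
        with \<open>\<not> k > 0\<close> have k: "-k > 0" by simp
        then have "\<bar>tk tt (nat (-k)) (T + (n + k)) - tk tt (nat (-k)) (n + k)\<bar> \<le> e" using T(1) by auto
        then show ?thesis using k unfolding tk_def by (simp add: add.assoc abs_minus_commute)
      qed
    qed
    then show "\<exists>T. m \<le> real_of_int T \<and> real_of_int T \<le> m + l \<and>
      (\<forall>n. \<forall>k. \<bar>tt (T + n + k) - tt (T + n) - (tt (n + k) - tt n)\<bar> \<le> e)" using T by blast
  qed
qed

lemma increments_finite_net: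
  assumes "e > 0"
  obtains F where "finite F" "\<And>m. \<exists>j\<in>F. \<forall>n. \<bar>tt (n + m) - tt m - (tt (n + j) - tt j)\<bar> \<le> e"
proof -
  obtain l where l: "l > 0" "\<And>m::real. \<exists>T. m \<le> real_of_int T \<and> real_of_int T \<le> m + l \<and>
      (\<forall>n. \<forall>k. \<bar>tt (T + n + k) - tt (T + n) - (tt (n + k) - tt n)\<bar> \<le> e)"
    using H2_almost_periods[OF assms] by blast
  define F where "F = {0..ceiling l}"
  have "\<exists>j\<in>F. \<forall>n. \<bar>tt (n + m) - tt m - (tt (n + j) - tt j)\<bar> \<le> e" for m
  proof -
    obtain T where T: "- real_of_int m \<le> real_of_int T" "real_of_int T \<le> - real_of_int m + l"
      "\<forall>n. \<forall>k. \<bar>tt (T + n + k) - tt (T + n) - (tt (n + k) - tt n)\<bar> \<le> e"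
      using l(2)[of "- real_of_int m"] by blast
    have j: "m + T \<in> F" unfolding F_def using T(1,2) by (auto simp: le_ceiling_iff)
    have "\<bar>tt (n + m) - tt m - (tt (n + (m + T)) - tt (m + T))\<bar> \<le> e" for n
      using T(3)[rule_format, of m n] by (simp add: ac_simps abs_minus_commute)
    then show ?thesis using j by blast
  qed
  then show ?thesis using that[of F] unfolding F_def by blast
qed

lemma translate_close_by_increments:
  fixes g :: "real \<Rightarrow> 'a::real_normed_vector"
  assumes incr: "\<bar>tt (n + m) - tt m - (tt (n + j) - tt j)\<bar> \<le> d"
    and unif: "\<And>x y. \<bar>x - y\<bar> \<le> d \<Longrightarrow> norm (g x - g y) \<le> e"
    and transl: "\<And>s. norm (g (s + tt m) - g (s + tt j)) \<le> e"
  shows "norm (g u - g (u + (tt (n + j) - tt (n + m)))) \<le> e + e"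
proof -
  have "\<bar>(u - tt m + tt j) - (u + (tt (n + j) - tt (n + m)))\<bar> \<le> d"
    using incr by (simp add: algebra_simps)
  then have "norm (g (u - tt m + tt j) - g (u + (tt (n + j) - tt (n + m)))) \<le> e" by (rule unif)
  moreover have "norm (g u - g (u - tt m + tt j)) \<le> e" using transl[of "u - tt m"] by simp
  ultimately show ?thesis
    using norm_diff_triangle[of "g u" "g (u + (tt (n + j) - tt (n + m)))" "g (u - tt m + tt j)"] by linarith
qed

lemma tt_gaps_bounded:
  obtains Lmax where "\<And>n. tt (n + 1) - tt n \<le> Lmax"
proof -
  obtain F where F: "finite F" "\<And>m. \<exists>j\<in>F. \<forall>n. \<bar>tt (n + m) - tt m - (tt (n + j) - tt j)\<bar> \<le> 1"
    using increments_finite_net[of 1] by auto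
  have "tt (n + 1) - tt n \<le> Max ((\<lambda>j. tt (j + 1) - tt j) ` F) + 1" for n
  proof -
    obtain j where "j \<in> F" "\<bar>tt (1 + n) - tt n - (tt (1 + j) - tt j)\<bar> \<le> 1" using F(2) by blast
    moreover have "tt (j + 1) - tt j \<le> Max ((\<lambda>j. tt (j + 1) - tt j) ` F)"
      using F(1) \<open>j \<in> F\<close> by auto
    ultimately show ?thesis by (simp add: add.commute)
  qed
  then show ?thesis by (rule that)
qed

lemma tt_unit_window:
  obtains k0 :: nat where "\<And>n. tt n + 1 \<le> tt (n + int k0)"
proof -
  obtain F where F: "finite F" "\<And>m. \<exists>j\<in>F. \<forall>n. \<bar>tt (n + m) - tt m - (tt (n + j) - tt j)\<bar> \<le> 1"
    using increments_finite_net[of 1] by auto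
  have "\<exists>k::nat. tt j + 2 \<le> tt (j + int k)" for j
  proof -
    obtain N where N: "tt j + 2 < tt N" using tt_exists_gt by blast
    then have "j < N" using tt_less_iff by fastforce
    then show ?thesis using N by (intro exI[of _ "nat (N - j)"]) simp
  qed
  then obtain k where k: "\<And>j. tt j + 2 \<le> tt (j + int (k j))" by metis
  define k0 where "k0 = Max (k ` F)"
  have "tt n + 1 \<le> tt (n + int k0)" for n
  proof -
    obtain j where j: "j \<in> F" "\<bar>tt (int k0 + n) - tt n - (tt (int k0 + j) - tt j)\<bar> \<le> 1"
      using F(2) by blast
    have "k j \<le> k0" unfolding k0_def using F(1) j(1) by simp
    then have "tt (j + int (k j)) \<le> tt (j + int k0)" by (simp add: tt_le_iff)
    then show ?thesis using k[of j] j(2) by (simp add: add.commute)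
  qed
  then show ?thesis by (rule that)
qed

lemma tt_unit_window_count:
  assumes k0: "\<And>n. tt n + 1 \<le> tt (n + int k0)" and "n \<le> m" "tt m < tt n + 1"
  shows "m < n + int k0"
  using k0[of n] assms(2,3) tt_le_iff[of "n + int k0" m] by linarith

lemma piecewise_closeness_chain:
  fixes f :: "real \<Rightarrow> 'a::real_normed_vector"
  assumes close: "\<And>a b n. a \<in> {tt n..tt (n + 1)} \<Longrightarrow> b \<in> {tt n..tt (n + 1)} \<Longrightarrow> \<bar>b - a\<bar> \<le> \<delta>
      \<Longrightarrow> norm (f b - f a) \<le> e"
    and a: "tt n \<le> a" "a \<le> tt (n + 1)" and b: "tt (n + int r) \<le> b" "b \<le> tt (n + int r + 1)"
    and ab: "a \<le> b" "b - a \<le> \<delta>"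
  shows "norm (f b - f a) \<le> (real r + 1) * e"
  using b ab
proof (induction r arbitrary: b)
  case 0
  then show ?case using close[of a n b] a by simp
next
  case (Suc r)
  define p where "p = tt (n + int r + 1)"
  have "a \<le> p" unfolding p_def using a(2) tt_le[of "n + 1" "n + int r + 1"] by simp
  moreover have "p \<le> b" unfolding p_def using Suc.prems(1) by (simp add: ac_simps)
  ultimately have "norm (f p - f a) \<le> (real r + 1) * e"
    using Suc.IH[of p] Suc.prems tt_mono[of "n + int r"] unfolding p_def by auto
  moreover have "norm (f b - f p) \<le> e"
    using close[of p "n + int r + 1" b] Suc.prems \<open>a \<le> p\<close> \<open>p \<le> b\<close> unfolding p_def
    by (simp add: ac_simps)
  ultimately show ?case using norm_diff_triangle[of "f b" "f a" "f p"] by (simp add: algebra_simps)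
qed

lemma H3_uniformly_continuous:
  fixes f :: "real \<Rightarrow> 'a::real_normed_vector"
  assumes "H3 tt f" and e: "e > 0"
  obtains d where "d > 0" "\<And>x y. \<bar>x - y\<bar> \<le> d \<Longrightarrow> norm (f x - f y) \<le> e"
proof -
  obtain k0 :: nat where k0: "\<And>n. tt n + 1 \<le> tt (n + int k0)" using tt_unit_window by blast
  define e' where "e' = e / (real k0 + 1)"
  have "e' > 0" unfolding e'_def using e by simp
  then obtain \<delta> where \<delta>: "\<delta> > 0" "\<And>t' \<tau>' n. \<bar>\<tau>'\<bar> \<le> \<delta> \<Longrightarrow> t' \<in> {tt n..tt (n+1)}
      \<Longrightarrow> t' + \<tau>' \<in> {tt n..tt (n+1)} \<Longrightarrow> norm (f (t' + \<tau>') - f t') \<le> e'"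
    using assms(1) unfolding H3_def by meson
  have close: "norm (f b - f a) \<le> e'"
    if "a \<in> {tt n..tt (n + 1)}" "b \<in> {tt n..tt (n + 1)}" "\<bar>b - a\<bar> \<le> \<delta>" for a b n
    using \<delta>(2)[of "b - a" a n] that by simp
  define d where "d = min \<delta> (1/2)"
  have ordered: "norm (f y - f x) \<le> e" if "x \<le> y" "y - x \<le> d" for x y
  proof -
    obtain n where n: "tt n \<le> x" "x < tt (n + 1)" using tt_locate by blast
    obtain m where m: "tt m \<le> y" "y < tt (m + 1)" using tt_locate by blast
    have "n \<le> m" using n m that tt_less_iff[of n "m + 1"] by simp
    define r where "r = nat (m - n)"
    have mr: "m = n + int r" unfolding r_def using \<open>n \<le> m\<close> by simp
    \<comment> \<open>An interval of length at most 1/2 meets at most k0 + 1 of the intervals [t(n), t(n+1)].\<close>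
    have "r \<le> k0"
    proof (cases "r = 0")
      case False
      then have "m < n + 1 + int k0"
        using tt_unit_window_count[OF k0, of "n + 1" m] mr m n that unfolding d_def by simp
      then show ?thesis using mr by simp
    qed simp
    have "norm (f y - f x) \<le> (real r + 1) * e'"
      using piecewise_closeness_chain[where \<delta> = \<delta> and e = e' and n = n and a = x and r = r and b = y, OF close] n m that unfolding d_def mr
      by (simp add: add.assoc)
    also have "\<dots> \<le> (real k0 + 1) * e'" using \<open>r \<le> k0\<close> \<open>e' > 0\<close> by (intro mult_right_mono) auto
    also have "\<dots> = e" unfolding e'_def by simp
    finally show ?thesis .
  qed
  have "norm (f x - f y) \<le> e" if "\<bar>x - y\<bar> \<le> d" for x y
    using ordered[of x y] ordered[of y x] that by (cases "x \<le> y") (auto simp: norm_minus_commute)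
  moreover have "d > 0" unfolding d_def using \<delta> by simp
  ultimately show ?thesis using that by blast
qed

lemma tt_avoiding_point:
  assumes k0: "\<And>n. tt n + 1 \<le> tt (n + int k0)" and e: "e > 0" "(2 * real k0 + 2) * e \<le> 1"
  shows "\<exists>i\<le>k0. t + 2 * real i * e \<notin> (\<Union>n. {tt n - e <..< tt n + e})"
proof (rule ccontr)
  assume "\<not> ?thesis"
  then have "\<forall>i\<in>{..k0}. \<exists>n. t + 2 * real i * e \<in> {tt n - e <..< tt n + e}" by auto
  then obtain ni where ni: "\<And>i. i \<in> {..k0} \<Longrightarrow> t + 2 * real i * e \<in> {tt (ni i) - e <..< tt (ni i) + e}"
    by metis
  \<comment> \<open>Pigeonhole: the k0 + 1 points are 2e apart, so they lie near distinct impulse times, but all of these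
    fall in a window of length 1, which holds at most k0 of them.\<close>
  have "inj_on ni {..k0}"
  proof (rule inj_onI)
    fix i j assume ij: "i \<in> {..k0}" "j \<in> {..k0}" "ni i = ni j"
    have "\<bar>2 * real i * e - 2 * real j * e\<bar> < 2 * e"
      using ni[OF ij(1)] ni[OF ij(2)] ij(3) by (simp add: abs_less_iff)
    moreover have "2 * real i * e - 2 * real j * e = (real i - real j) * (2 * e)"
      by (simp add: algebra_simps)
    then have "\<bar>2 * real i * e - 2 * real j * e\<bar> = \<bar>real i - real j\<bar> * (2 * e)"
      using e(1) by (simp add: abs_mult)
    ultimately have "\<bar>real i - real j\<bar> < 1" using e(1) by simp
    then show "i = j" by linarith
  qed
  moreover define N where "N = Min (ni ` {..k0})"
  have "ni ` {..k0} \<subseteq> {N..<N + int k0}"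
  proof
    fix x assume x: "x \<in> ni ` {..k0}"
    then obtain i where i: "i \<in> {..k0}" "x = ni i" by blast
    have "N \<in> ni ` {..k0}" unfolding N_def by (intro Min_in) auto
    then obtain i0 where i0: "i0 \<in> {..k0}" "N = ni i0" by blast
    have Nx: "N \<le> x" unfolding N_def using x by simp
    have "2 * real i * e \<le> 2 * real k0 * e" "0 \<le> 2 * real i0 * e" using i(1) e(1) by auto
    moreover have "t + 2 * real i * e \<in> {tt x - e <..< tt x + e}" "t + 2 * real i0 * e \<in> {tt N - e <..< tt N + e}"
      using ni i i0 by auto
    moreover have "(2 * real k0 + 2) * e = 2 * real k0 * e + 2 * e" by (simp add: algebra_simps)
    ultimately have "tt x < tt N + 1" using e(2) by (simp only: greaterThanLessThan_iff) linarith
    then show "x \<in> {N..<N + int k0}" using tt_unit_window_count[OF k0 Nx] Nx by simp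
  qed
  ultimately have "card {..k0} \<le> card {N..<N + int k0}" by (intro card_inj_on_le) auto
  then show False by simp
qed

lemma H3_imp_almost_periodic:
  fixes f :: "real \<Rightarrow> 'a::real_normed_vector"
  assumes H3: "H3 tt f"
  shows "almost_periodic_real f"
  unfolding almost_periodic_real_def
proof (intro conjI allI impI)
  show "continuous_on UNIV f"
    unfolding continuous_on_iff
  proof (intro ballI allI impI)
    fix x e :: real assume "e > 0"
    then obtain d where d: "d > 0" "\<And>x y. \<bar>x - y\<bar> \<le> d \<Longrightarrow> norm (f x - f y) \<le> e / 2"
      using H3_uniformly_continuous[OF H3, of "e / 2"] by auto
    have "dist (f x') (f x) < e" if "dist x' x < d" for x'
      using d(2)[of x' x] that \<open>e > 0\<close> by (simp add: dist_norm)
    with d(1) show "\<exists>d>0. \<forall>x'\<in>UNIV. dist x' x < d \<longrightarrow> dist (f x') (f x) < e" by blast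
  qed
next
  fix \<eta> :: real assume \<eta>: "\<eta> > 0"
  obtain k0 :: nat where k0: "\<And>n. tt n + 1 \<le> tt (n + int k0)" using tt_unit_window by blast
  obtain d where d: "d > 0" "\<And>x y. \<bar>x - y\<bar> \<le> d \<Longrightarrow> norm (f x - f y) \<le> \<eta> / 3"
    using H3_uniformly_continuous[OF H3, of "\<eta> / 3"] \<eta> by auto
  define e where "e = min (\<eta> / 3) (min d 1 / (2 * real k0 + 2))"
  have "e \<le> min d 1 / (2 * real k0 + 2)" unfolding e_def by (rule min.cobounded2)
  then have "(2 * real k0 + 2) * e \<le> min d 1"
    by (simp add: pos_le_divide_eq mult.commute add_pos_nonneg)
  moreover have "e \<le> \<eta> / 3" unfolding e_def by (rule min.cobounded1)
  moreover have "e > 0" unfolding e_def using \<eta> d(1) by simp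
  ultimately have e: "e > 0" "e \<le> \<eta> / 3" "(2 * real k0 + 2) * e \<le> d" "(2 * real k0 + 2) * e \<le> 1"
    by auto
  \<comment> \<open>An almost period away from the impulse times is an almost period everywhere, since every t is
    d-close to a point s at distance at least e from all impulse times.\<close>
  have "norm (f (t + \<tau>) - f t) \<le> \<eta>"
    if \<tau>: "\<forall>t. t \<notin> (\<Union>n. {tt n - e <..< tt n + e}) \<longrightarrow> norm (f (t + \<tau>) - f t) \<le> e" for \<tau> t
  proof -
    obtain i where i: "i \<le> k0" "t + 2 * real i * e \<notin> (\<Union>n. {tt n - e <..< tt n + e})"
      using tt_avoiding_point[OF k0 e(1) e(4)] by blast
    define s where "s = t + 2 * real i * e"
    have "0 \<le> 2 * real i * e" using e(1) by simp
    moreover have "2 * real i * e \<le> (2 * real k0 + 2) * e" using i(1) e(1) by (intro mult_right_mono) auto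
    moreover have "s - t = 2 * real i * e" unfolding s_def by simp
    ultimately have "\<bar>s - t\<bar> \<le> d" using e(3) by linarith
    then have "norm (f (t + \<tau>) - f (s + \<tau>)) \<le> \<eta> / 3" "norm (f s - f t) \<le> \<eta> / 3"
      using d(2)[of "t + \<tau>" "s + \<tau>"] d(2)[of s t] by (auto simp: abs_minus_commute)
    moreover have "norm (f (s + \<tau>) - f s) \<le> e" using \<tau> i(2) unfolding s_def by blast
    ultimately show ?thesis
      using norm_diff_triangle[of "f (t + \<tau>)" "f t" "f (s + \<tau>)"] norm_diff_triangle[of "f (s + \<tau>)" "f t" "f s"] e(2)
      by linarith
  qed
  moreover have "rel_dense_real {\<tau>. \<forall>t. t \<notin> (\<Union>n. {tt n - e <..< tt n + e}) \<longrightarrow> norm (f (t + \<tau>) - f t) \<le> e}"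
    using H3 e(1) unfolding H3_def by blast
  ultimately show "rel_dense_real {\<tau>. \<forall>t. norm (f (t + \<tau>) - f t) \<le> \<eta>}"
    by (elim rel_dense_real_mono) auto
qed

end

section \<open>The transition matrix of an almost periodic linear system\<close>

locale ap_fundamental_matrix =
  fixes A X :: "real \<Rightarrow> complex^'q^'q"
  assumes X_fund: "fundamental_matrix A X" and A_ap: "almost_periodic_real A"
begin

definition A_bound where "A_bound = (SOME M. \<forall>t. norm (A t) \<le> M)"

lemma norm_A_le: "norm (A t) \<le> A_bound"
proof -
  obtain M where "\<And>t. norm (A t) \<le> M" using almost_periodic_real_bounded[OF A_ap] by blast
  then have "\<exists>M. \<forall>t. norm (A t) \<le> M" by blast
  from someI_ex[OF this] show ?thesis unfolding A_bound_def by blast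
qed

lemma A_bound_nonneg: "A_bound \<ge> 0" using norm_A_le[of 0] norm_ge_zero order_trans by blast

lemma continuous_on_A: "continuous_on S A"
  using almost_periodic_real_continuous[OF A_ap] continuous_on_subset by blast

lemma invertible_X: "invertible (X t)" using X_fund unfolding fundamental_matrix_def by blast

lemma X_has_integral: "s \<le> t \<Longrightarrow> ((\<lambda>u. A u ** X u) has_integral (X t - X s)) {s..t}"
  using X_fund unfolding fundamental_matrix_def by blast

lemma continuous_on_X: "continuous_on S X"
proof -
  have "isCont X t" for t
  proof -
    have int: "(\<lambda>u. A u ** X u) integrable_on {t-1..t+1}" using X_has_integral[of "t-1" "t+1"] by auto
    have eq: "X x = X (t-1) + integral {t-1..x} (\<lambda>u. A u ** X u)" if "x \<in> {t-1..t+1}" for x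
      using X_has_integral[of "t-1" x] that by (simp add: integral_unique)
    have "continuous_on {t-1..t+1} (\<lambda>x. X (t-1) + integral {t-1..x} (\<lambda>u. A u ** X u))"
      by (intro continuous_intros indefinite_integral_continuous_1 int)
    then have "continuous_on {t-1..t+1} X" using eq continuous_on_cong by (metis (no_types, lifting))
    then show ?thesis by (rule continuous_on_interior) auto
  qed
  then show ?thesis by (simp add: continuous_at_imp_continuous_on)
qed

lemma Xts_same: "Xts X x x = mat 1"
  unfolding Xts_def using invertible_matrix_inv[OF invertible_X] by simp

lemma continuous_on_Xts_fst: "continuous_on S (\<lambda>u. Xts X u y)"
  unfolding Xts_def by (intro continuous_intros continuous_on_X)

lemma continuous_on_A_mult_Xts: "continuous_on S (\<lambda>u. A u ** Xts X u y)"
  by (intro continuous_intros continuous_on_A continuous_on_Xts_fst)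

lemma A_mult_Xts_has_integral: "x \<le> x' \<Longrightarrow> ((\<lambda>u. A u ** Xts X u y) has_integral (Xts X x' y - Xts X x y)) {x..x'}"
proof -
  assume "x \<le> x'"
  from has_integral_linear[OF X_has_integral[OF this] bounded_bilinear.bounded_linear_left[OF bounded_bilinear_matrix_mult, of "matrix_inv (X y)"]]
  have "((\<lambda>u. (A u ** X u) ** matrix_inv (X y)) has_integral ((X x' - X x) ** matrix_inv (X y))) {x..x'}"
    by (simp add: o_def)
  moreover have "(X x' - X x) ** matrix_inv (X y) = Xts X x' y - Xts X x y"
    unfolding Xts_def by (rule bounded_bilinear.diff_left[OF bounded_bilinear_matrix_mult])
  ultimately show ?thesis unfolding Xts_def by (simp add: matrix_mul_assoc)
qed

lemma Xts_eq_forward: "y \<le> u \<Longrightarrow> Xts X u y = mat 1 + integral {y..u} (\<lambda>v. A v ** Xts X v y)"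
  using A_mult_Xts_has_integral[of y u y] Xts_same by (simp add: integral_unique)

lemma Xts_eq_backward: "u \<le> y \<Longrightarrow> Xts X u y = mat 1 - integral {u..y} (\<lambda>v. A v ** Xts X v y)"
  using A_mult_Xts_has_integral[of u y y] Xts_same by (simp add: integral_unique)

text \<open>The rate A_bound + 1 instead of A_bound keeps the Gronwall rate positive; norm_A_mult_le is
  stated in the shape a + \<beta> * norm M used by the Gronwall lemmas, with a = 0.\<close>

definition Xts_bound where "Xts_bound L = sqrt (CARD('q)) * exp ((A_bound + 1) * L)"

lemma Xts_bound_pos: "Xts_bound L > 0" unfolding Xts_bound_def by simp

lemma norm_A_mult_le: "norm (A v ** M) \<le> 0 + (A_bound + 1) * norm M"
proof -
  have "norm (A v ** M) \<le> norm (A v) * norm M" by (rule norm_matrix_mult_le)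
  also have "\<dots> \<le> A_bound * norm M" by (intro mult_right_mono norm_A_le) simp
  also have "\<dots> \<le> (A_bound + 1) * norm M" by (intro mult_right_mono) auto
  finally show ?thesis by simp
qed

lemma norm_Xts_le: "\<bar>x - y\<bar> \<le> L \<Longrightarrow> norm (Xts X x y) \<le> Xts_bound L"
proof -
  assume xy: "\<bar>x - y\<bar> \<le> L"
  have b: "A_bound + 1 > 0" using A_bound_nonneg by simp
  show ?thesis
  proof (cases "y \<le> x")
    case True
    have "norm (Xts X x y) \<le> (norm (mat 1 :: complex^'q^'q) + 0 * L) * exp ((A_bound + 1) * L)"
      by (rule gronwall_integral_equation_forward[OF continuous_on_Xts_fst continuous_on_A_mult_Xts b order_refl Xts_eq_forward norm_A_mult_le]) (use True xy in auto)
    then show ?thesis unfolding Xts_bound_def norm_mat_1 by simp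
  next
    case False
    have "norm (Xts X x y) \<le> (norm (mat 1 :: complex^'q^'q) + 0 * L) * exp ((A_bound + 1) * L)"
      by (rule gronwall_integral_equation_backward[OF continuous_on_Xts_fst continuous_on_A_mult_Xts b order_refl Xts_eq_backward norm_A_mult_le]) (use False xy in auto)
    then show ?thesis unfolding Xts_bound_def norm_mat_1 by simp
  qed
qed

lemma Xts_lipschitz:
  assumes "\<bar>x - y\<bar> \<le> L" "\<bar>x' - y\<bar> \<le> L"
  shows "norm (Xts X x y - Xts X x' y) \<le> A_bound * Xts_bound L * \<bar>x - x'\<bar>"
proof -
  have main: "norm (Xts X x' y - Xts X x y) \<le> A_bound * Xts_bound L * (x' - x)"
    if xx: "x \<le> x'" "\<bar>x - y\<bar> \<le> L" "\<bar>x' - y\<bar> \<le> L" for x x'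
  proof -
    have bd: "norm (A u ** Xts X u y) \<le> A_bound * Xts_bound L" if u: "u \<in> cbox x x'" for u
    proof -
      have "norm (A u ** Xts X u y) \<le> norm (A u) * norm (Xts X u y)" by (rule norm_matrix_mult_le)
      also have "\<dots> \<le> A_bound * Xts_bound L"
        using u xx by (intro mult_mono norm_A_le norm_Xts_le) (auto simp: A_bound_nonneg abs_le_iff)
      finally show ?thesis .
    qed
    have hi: "((\<lambda>u. A u ** Xts X u y) has_integral Xts X x' y - Xts X x y) (cbox x x')"
      using A_mult_Xts_has_integral[OF xx(1)] by simp
    have "0 \<le> A_bound * Xts_bound L" using A_bound_nonneg Xts_bound_pos[of L] by simp
    from has_integral_bound[OF this hi bd] show ?thesis using xx by simp
  qed
  show ?thesis
  proof (cases "x \<le> x'")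
    case True then show ?thesis using main[OF True assms] by (simp add: norm_minus_commute)
  next
    case False then show ?thesis using main[of x' x] assms by simp
  qed
qed

definition Xts_translate_const where
  "Xts_translate_const L = Xts_bound L * L * exp ((A_bound + 1) * L)"

lemma Xts_translate_diff_le:
  assumes th: "\<And>u. norm (A u - A (u + c)) \<le> \<theta>" and xy: "\<bar>x - y\<bar> \<le> L"
  shows "norm (Xts X x y - Xts X (x + c) (y + c)) \<le> \<theta> * Xts_translate_const L"
proof -
  have b: "A_bound + 1 > 0" using A_bound_nonneg by simp
  have th0: "\<theta> \<ge> 0" using th[of 0] norm_ge_zero order_trans by blast
  have cAc: "continuous_on S (\<lambda>v. A (v + c))" for S
    by (rule continuous_on_compose2[OF continuous_on_A[of UNIV]]) (auto intro!: continuous_intros)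
  have cPc: "continuous_on S (\<lambda>v. Xts X (v + c) (y + c))" for S
    by (rule continuous_on_compose2[OF continuous_on_Xts_fst[of UNIV]]) (auto intro!: continuous_intros)
  define F where "F u = Xts X u y - Xts X (u + c) (y + c)" for u
  define g where "g v = A v ** Xts X v y - A (v + c) ** Xts X (v + c) (y + c)" for v
  have cF: "continuous_on S F" for S unfolding F_def
    by (intro continuous_intros continuous_on_Xts_fst cPc)
  have cg: "continuous_on S g" for S unfolding g_def
    by (intro continuous_intros continuous_on_A_mult_Xts cAc cPc)
  have gb: "norm (g v) \<le> \<theta> * Xts_bound L + (A_bound + 1) * norm (F v)" if "\<bar>v - y\<bar> \<le> L" for v
  proof -
    have "g v = (A v - A (v + c)) ** Xts X v y + A (v + c) ** F v"
      unfolding g_def F_def by (simp add: bounded_bilinear.diff_left[OF bounded_bilinear_matrix_mult] bounded_bilinear.diff_right[OF bounded_bilinear_matrix_mult])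
    then have "norm (g v) \<le> norm ((A v - A (v + c)) ** Xts X v y) + norm (A (v + c) ** F v)"
      by (simp add: norm_triangle_ineq)
    also have "norm ((A v - A (v + c)) ** Xts X v y) \<le> \<theta> * Xts_bound L"
      using norm_matrix_mult_le[of "A v - A (v + c)" "Xts X v y"] th[of v] norm_Xts_le[OF that]
      by (smt (verit) mult_mono norm_ge_zero)
    also have "norm (A (v + c) ** F v) \<le> 0 + (A_bound + 1) * norm (F v)" by (rule norm_A_mult_le)
    finally show ?thesis by simp
  qed
  have int1: "integral {a..b} (\<lambda>v. A v ** Xts X v y) = Xts X b y - Xts X a y" if "a \<le> b" for a b
    using A_mult_Xts_has_integral[OF that] by (simp add: integral_unique)
  have int2: "integral {a..b} (\<lambda>v. A (v + c) ** Xts X (v + c) (y + c)) = Xts X (b + c) (y + c) - Xts X (a + c) (y + c)" if "a \<le> b" for a b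
    using integral_translate[where h = "\<lambda>w. A w ** Xts X w (y + c)" and y = a and u = b and c = c] A_mult_Xts_has_integral[of "a + c" "b + c" "y + c"] that
    by (simp add: integral_unique)
  have gint: "integral {a..b} g = integral {a..b} (\<lambda>v. A v ** Xts X v y) - integral {a..b} (\<lambda>v. A (v + c) ** Xts X (v + c) (y + c))" for a b
    unfolding g_def
    by (rule Henstock_Kurzweil_Integration.integral_diff)
       (auto intro!: integrable_continuous_real continuous_on_A_mult_Xts cAc cPc continuous_intros)
  show ?thesis
  proof (cases "y \<le> x")
    case True
    have "norm (F x) \<le> (norm (0::complex^'q^'q) + (\<theta> * Xts_bound L) * L) * exp ((A_bound + 1) * L)"
    proof (rule gronwall_integral_equation_forward[OF cF cg b])
      show "0 \<le> \<theta> * Xts_bound L" using th0 Xts_bound_pos[of L] by simp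
      fix u assume u: "u \<in> {y..y+L}"
      show "F u = 0 + integral {y..u} g" unfolding gint F_def using int1[of y u] int2[of y u] u by (simp add: Xts_same)
    next
      fix v assume "v \<in> {y..y+L}" then show "norm (g v) \<le> \<theta> * Xts_bound L + (A_bound + 1) * norm (F v)" by (intro gb) auto
    qed (use True xy in auto)
    then show ?thesis unfolding F_def Xts_translate_const_def by (simp add: mult.assoc)
  next
    case False
    have "norm (F x) \<le> (norm (0::complex^'q^'q) + (\<theta> * Xts_bound L) * L) * exp ((A_bound + 1) * L)"
    proof (rule gronwall_integral_equation_backward[OF cF cg b])
      show "0 \<le> \<theta> * Xts_bound L" using th0 Xts_bound_pos[of L] by simp
      fix u assume u: "u \<in> {y-L..y}"
      show "F u = 0 - integral {u..y} g" unfolding gint F_def using int1[of u y] int2[of u y] u by (simp add: Xts_same)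
    next
      fix v assume "v \<in> {y-L..y}" then show "norm (g v) \<le> \<theta> * Xts_bound L + (A_bound + 1) * norm (F v)" by (intro gb) auto
    qed (use False xy in auto)
    then show ?thesis unfolding F_def Xts_translate_const_def by (simp add: mult.assoc)
  qed
qed

lemma continuous_on_matrix_inv_X: "continuous_on S (\<lambda>u. matrix_inv (X u))"
proof -
  have "isCont (\<lambda>u. matrix_inv (X u)) u0" for u0
  proof -
    define C0 where "C0 = norm (matrix_inv (X u0))"
    have key: "norm (matrix_inv (X u) - matrix_inv (X u0)) \<le> Xts_bound 1 * C0 * C0 * norm (X u0 - X u)"
      if "\<bar>u - u0\<bar> \<le> 1" for u
    proof -
      have e1: "matrix_inv (X u) = matrix_inv (X u0) ** Xts X u0 u"
        unfolding Xts_def by (simp add: matrix_mul_assoc invertible_matrix_inv[OF invertible_X])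
      have m1: "matrix_inv (X u) ** X u = mat 1" "X u0 ** matrix_inv (X u0) = mat 1" using invertible_matrix_inv[OF invertible_X] by auto
      have "matrix_inv (X u) ** (X u0 - X u) = matrix_inv (X u) ** X u0 - mat 1"
        using bounded_bilinear.diff_right[OF bounded_bilinear_matrix_mult, of "matrix_inv (X u)" "X u0" "X u"] m1 by simp
      then have "matrix_inv (X u) ** (X u0 - X u) ** matrix_inv (X u0) = (matrix_inv (X u) ** X u0) ** matrix_inv (X u0) - matrix_inv (X u0)"
        using bounded_bilinear.diff_left[OF bounded_bilinear_matrix_mult, of "matrix_inv (X u) ** X u0" "mat 1" "matrix_inv (X u0)"] by simp
      also have "(matrix_inv (X u) ** X u0) ** matrix_inv (X u0) = matrix_inv (X u)"
        using m1(2) by (simp add: matrix_mul_assoc[symmetric])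
      finally have e2: "matrix_inv (X u) - matrix_inv (X u0) = matrix_inv (X u) ** (X u0 - X u) ** matrix_inv (X u0)" by simp
      have n0: "norm (matrix_inv (X u)) \<le> C0 * norm (Xts X u0 u)"
        unfolding e1 C0_def by (rule norm_matrix_mult_le)
      have n1: "norm (matrix_inv (X u)) \<le> C0 * Xts_bound 1"
        using n0 norm_Xts_le[of u0 u 1] that by (smt (verit, best) mult_left_mono norm_ge_zero C0_def abs_minus_commute)
      have "norm (matrix_inv (X u) - matrix_inv (X u0)) \<le> norm (matrix_inv (X u)) * norm (X u0 - X u) * C0"
        unfolding e2 C0_def by (meson norm_matrix_mult_le mult_right_mono norm_ge_zero order_trans)
      also have "\<dots> \<le> C0 * Xts_bound 1 * norm (X u0 - X u) * C0"
        using n1 by (intro mult_right_mono) (auto simp: C0_def)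
      finally show ?thesis by (simp add: ac_simps)
    qed
    have ev: "\<forall>\<^sub>F u in at u0. norm (matrix_inv (X u) - matrix_inv (X u0)) \<le> Xts_bound 1 * C0 * C0 * norm (X u0 - X u)"
      unfolding eventually_at by (intro exI[of _ 1]) (auto intro!: key simp: dist_real_def)
    have "isCont X u0" using continuous_on_X[of UNIV] by (simp add: continuous_on_eq_continuous_at)
    then have "(X \<longlongrightarrow> X u0) (at u0)" by (simp add: isCont_def)
    then have "((\<lambda>u. Xts_bound 1 * C0 * C0 * norm (X u0 - X u)) \<longlongrightarrow> Xts_bound 1 * C0 * C0 * norm (X u0 - X u0)) (at u0)"
      by (intro tendsto_intros)
    then have "((\<lambda>u. Xts_bound 1 * C0 * C0 * norm (X u0 - X u)) \<longlongrightarrow> 0) (at u0)" by simp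
    from Lim_null_comparison[OF ev this] show ?thesis
      by (simp add: isCont_def Lim_null[symmetric])
  qed
  then show ?thesis by (simp add: continuous_at_imp_continuous_on)
qed

lemma continuous_on_Xts_snd: "continuous_on S (\<lambda>u. Xts X x u)"
  unfolding Xts_def by (intro continuous_intros continuous_on_matrix_inv_X)

definition Jloc :: "(real \<Rightarrow> complex^'q^'q) \<Rightarrow> real \<Rightarrow> real \<Rightarrow> complex^'q^'q" where
  "Jloc B a L = mat 1 + integral {a..a+L} (\<lambda>u. Xts X a u ** B u)"

definition Hloc :: "(real \<Rightarrow> complex^'q^'q) \<Rightarrow> real \<Rightarrow> real \<Rightarrow> complex^'q^'q" where
  "Hloc B a L = Xts X (a + L) a ** Jloc B a L"

definition hloc :: "(real \<Rightarrow> complex^'q) \<Rightarrow> real \<Rightarrow> real \<Rightarrow> complex^'q" where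
  "hloc f a L = integral {a..a+L} (\<lambda>u. Xts X (a + L) u *v f u)"

lemma Hmat_eq_Hloc: "Hmat X B tt n = Hloc B (tt n) (tt (n + 1) - tt n)"
  unfolding Hmat_def Zmat_def Jmat_def Hloc_def Jloc_def by simp

lemma hvec_eq_hloc: "hvec X f tt n = hloc f (tt n) (tt (n + 1) - tt n)"
  unfolding hvec_def hloc_def by simp

definition Xts_perturb_const where
  "Xts_perturb_const L = Xts_translate_const L + A_bound * Xts_bound L"

lemma Xts_translate_const_nonneg: "L \<ge> 0 \<Longrightarrow> Xts_translate_const L \<ge> 0"
  unfolding Xts_translate_const_def using Xts_bound_pos[of L] by simp

lemma Xts_perturb_const_nonneg: "L \<ge> 0 \<Longrightarrow> Xts_perturb_const L \<ge> 0"
  unfolding Xts_perturb_const_def using Xts_translate_const_nonneg Xts_bound_pos[of L] A_bound_nonneg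
  by simp

lemma Xts_perturb_le:
  assumes thA: "\<And>u. norm (A u - A (u + c)) \<le> \<theta>"
    and xy: "\<bar>x - y\<bar> \<le> L" "\<bar>x' - (y + c)\<bar> \<le> L" and \<delta>: "\<bar>x + c - x'\<bar> \<le> \<delta>"
  shows "norm (Xts X x y - Xts X x' (y + c)) \<le> Xts_perturb_const L * (\<theta> + \<delta>)"
proof -
  have L: "L \<ge> 0" and \<theta>: "\<theta> \<ge> 0" using xy(1) order_trans[OF norm_ge_zero thA] by auto
  have "norm (Xts X x y - Xts X (x + c) (y + c)) \<le> \<theta> * Xts_translate_const L"
    by (rule Xts_translate_diff_le[OF thA xy(1)])
  moreover have "norm (Xts X (x + c) (y + c) - Xts X x' (y + c)) \<le> A_bound * Xts_bound L * \<bar>x + c - x'\<bar>"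
    by (rule Xts_lipschitz) (use xy in auto)
  moreover have "A_bound * Xts_bound L * \<bar>x + c - x'\<bar> \<le> A_bound * Xts_bound L * \<delta>"
    using \<delta> A_bound_nonneg Xts_bound_pos[of L] by (intro mult_left_mono) auto
  moreover have "\<theta> * Xts_translate_const L + A_bound * Xts_bound L * \<delta> \<le> Xts_perturb_const L * (\<theta> + \<delta>)"
    using \<theta> \<delta> Xts_translate_const_nonneg[OF L] A_bound_nonneg Xts_bound_pos[of L]
    unfolding Xts_perturb_const_def by (simp add: algebra_simps add_mono mult_left_mono)
  ultimately show ?thesis
    using norm_diff_triangle[of "Xts X x y" "Xts X x' (y + c)" "Xts X (x + c) (y + c)"] by linarith
qed

lemma norm_Jloc_le:
  assumes Bc: "continuous_on UNIV B" and MB: "\<And>u. norm (B u) \<le> MB" and L: "0 \<le> L" "L \<le> Lm"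
  shows "norm (Jloc B a L) \<le> sqrt (CARD('q)) + Lm * Xts_bound Lm * MB"
proof -
  have "norm (integral {a..a+L} (\<lambda>u. Xts X a u ** B u)) \<le> Xts_bound Lm * MB * ((a + L) - a)"
  proof (rule norm_integral_le_length)
    show "continuous_on {a..a+L} (\<lambda>u. Xts X a u ** B u)"
      by (intro continuous_intros continuous_on_Xts_snd continuous_on_subset[OF Bc]) simp
    show "norm (Xts X a v ** B v) \<le> Xts_bound Lm * MB" if "v \<in> {a..a+L}" for v
    proof -
      have "norm (Xts X a v) \<le> Xts_bound Lm" using that L by (intro norm_Xts_le) auto
      then show ?thesis
        using norm_matrix_mult_le[of "Xts X a v" "B v"] MB[of v] by (meson mult_mono norm_ge_zero order_trans)
    qed
  qed (use L in simp)
  also have "\<dots> \<le> Lm * Xts_bound Lm * MB"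
    using mult_right_mono[of L Lm "Xts_bound Lm * MB"] L order_trans[OF norm_ge_zero MB] Xts_bound_pos[of Lm]
    by (simp add: ac_simps)
  finally have "norm (integral {a..a+L} (\<lambda>u. Xts X a u ** B u)) \<le> Lm * Xts_bound Lm * MB" .
  moreover have "norm (mat 1 :: complex^'q^'q) = sqrt (CARD('q))" by (rule norm_mat_1)
  ultimately show ?thesis
    using norm_triangle_ineq[of "mat 1 :: complex^'q^'q"] unfolding Jloc_def by (smt (verit))
qed

definition Jloc_translate_const where
  "Jloc_translate_const L MB = L * (Xts_translate_const L * MB + Xts_bound L) + Xts_bound L * MB"

lemma Jloc_translate_diff_le:
  fixes B :: "real \<Rightarrow> complex^'q^'q"
  assumes Bc: "continuous_on UNIV B" and MB: "\<And>u. norm (B u) \<le> MB"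
    and L: "0 \<le> L" "L \<le> Lm" "0 \<le> L'" "L' \<le> Lm"
    and thA: "\<And>u. norm (A u - A (u + c)) \<le> \<theta>" and thB: "\<And>u. norm (B u - B (u + c)) \<le> \<theta>"
    and dl: "\<bar>L - L'\<bar> \<le> \<delta>"
  shows "norm (Jloc B a L - Jloc B (a + c) L') \<le> Jloc_translate_const Lm MB * (\<theta> + \<delta>)"
proof -
  define M E w where "M = Xts_bound Lm" "E = Xts_translate_const Lm" "w = \<theta> + \<delta>"
  have Lm: "Lm \<ge> 0" using L by linarith
  have MB0: "MB \<ge> 0" and \<theta>: "0 \<le> \<theta>" "\<theta> \<le> w" and \<delta>: "\<bar>L - L'\<bar> \<le> w"
    using order_trans[OF norm_ge_zero MB] order_trans[OF norm_ge_zero thA] dl unfolding M_E_w_def(3) by auto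
  have M: "M > 0" "E \<ge> 0" unfolding M_E_w_def
    using Xts_bound_pos Xts_translate_const_nonneg[OF Lm] by auto
  define g1 where "g1 v = Xts X a v ** B v" for v
  define g2 where "g2 v = Xts X (a + c) (v + c) ** B (v + c)" for v
  have cg1: "continuous_on S g1" for S
    unfolding g1_def by (intro continuous_intros continuous_on_Xts_snd continuous_on_subset[OF Bc]) simp
  have cg2: "continuous_on S g2" for S
    unfolding g2_def by (intro continuous_intros continuous_on_compose2[OF continuous_on_Xts_snd[of UNIV]]
        continuous_on_compose2[OF Bc]) auto
  have eqJ: "Jloc B a L - Jloc B (a + c) L' = integral {a..a+L} g1 - integral {a..a+L'} g2"
    using integral_translate[where h = "\<lambda>u. Xts X (a + c) u ** B u" and y = a and u = "a + L'" and c = c]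
    unfolding Jloc_def g1_def g2_def by (simp add: ac_simps)
  have g_bound: "norm (g2 v) \<le> M * MB" if "v \<in> {a..a+Lm}" for v
  proof -
    have "norm (Xts X (a + c) (v + c)) \<le> M" unfolding M_E_w_def using that by (auto intro: norm_Xts_le)
    then show ?thesis unfolding g2_def
      using norm_matrix_mult_le MB MB0 by (meson mult_mono norm_ge_zero order_trans)
  qed
  have g_diff: "norm (g1 v - g2 v) \<le> (E * MB + M) * w" if v: "v \<in> {a..a+L}" for v
  proof -
    have "norm (g1 v - g2 v) \<le> norm (Xts X a v - Xts X (a + c) (v + c)) * norm (B v)
        + norm (Xts X (a + c) (v + c)) * norm (B v - B (v + c))"
      unfolding g1_def g2_def by (rule norm_matrix_mult_diff_le)
    also have "\<dots> \<le> (\<theta> * E) * MB + M * \<theta>"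
    proof (intro add_mono mult_mono)
      show "norm (Xts X a v - Xts X (a + c) (v + c)) \<le> \<theta> * E"
        unfolding M_E_w_def by (rule Xts_translate_diff_le[OF thA]) (use v L in auto)
      show "norm (Xts X (a + c) (v + c)) \<le> M"
        unfolding M_E_w_def by (rule norm_Xts_le) (use v L in auto)
    qed (use MB thB \<theta> M in auto)
    also have "\<dots> \<le> (E * MB + M) * w"
      using \<theta> M MB0 by (simp add: algebra_simps add_mono mult_right_mono mult_left_mono)
    finally show ?thesis .
  qed
  have "norm (integral {a..a+L} g1 - integral {a..a+L'} g2) \<le> (E * MB + M) * w * L + M * MB * \<bar>L - L'\<bar>"
    by (rule norm_integral_diff_le[OF cg1 cg2 g_diff g_bound L])
  also have "\<dots> \<le> (E * MB + M) * w * Lm + M * MB * w"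
    using L \<delta> \<theta> M MB0 by (intro add_mono mult_left_mono) auto
  finally show ?thesis unfolding eqJ Jloc_translate_const_def M_E_w_def by (simp add: algebra_simps)
qed

definition Hloc_translate_const where
  "Hloc_translate_const L MB =
     Xts_perturb_const L * (sqrt (CARD('q)) + L * Xts_bound L * MB) + Xts_bound L * Jloc_translate_const L MB"

lemma Hloc_translate_diff_le:
  fixes B :: "real \<Rightarrow> complex^'q^'q"
  assumes Bc: "continuous_on UNIV B" and MB: "\<And>u. norm (B u) \<le> MB"
    and L: "0 \<le> L" "L \<le> Lm" "0 \<le> L'" "L' \<le> Lm"
    and thA: "\<And>u. norm (A u - A (u + c)) \<le> \<theta>" and thB: "\<And>u. norm (B u - B (u + c)) \<le> \<theta>"
    and dl: "\<bar>L - L'\<bar> \<le> \<delta>"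
  shows "norm (Hloc B a L - Hloc B (a + c) L') \<le> Hloc_translate_const Lm MB * (\<theta> + \<delta>)"
proof -
  have "norm (Hloc B a L - Hloc B (a + c) L')
      \<le> norm (Xts X (a + L) a - Xts X (a + c + L') (a + c)) * norm (Jloc B a L)
        + norm (Xts X (a + c + L') (a + c)) * norm (Jloc B a L - Jloc B (a + c) L')"
    unfolding Hloc_def by (rule norm_matrix_mult_diff_le)
  also have "\<dots> \<le> Xts_perturb_const Lm * (\<theta> + \<delta>) * (sqrt (CARD('q)) + Lm * Xts_bound Lm * MB)
      + Xts_bound Lm * (Jloc_translate_const Lm MB * (\<theta> + \<delta>))"
  proof (intro add_mono mult_mono)
    show "norm (Xts X (a + L) a - Xts X (a + c + L') (a + c)) \<le> Xts_perturb_const Lm * (\<theta> + \<delta>)"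
      by (rule Xts_perturb_le[OF thA]) (use L dl in auto)
    show "norm (Xts X (a + c + L') (a + c)) \<le> Xts_bound Lm" by (rule norm_Xts_le) (use L in auto)
    show "0 \<le> Xts_perturb_const Lm * (\<theta> + \<delta>)"
      using Xts_perturb_const_nonneg[of Lm] order_trans[OF norm_ge_zero thA] dl L by simp
  qed (use norm_Jloc_le[OF Bc MB L(1,2)] Jloc_translate_diff_le[OF Bc MB L thA thB dl] less_imp_le[OF Xts_bound_pos] in auto)
  finally show ?thesis unfolding Hloc_translate_const_def by (simp add: algebra_simps)
qed

definition hloc_translate_const where
  "hloc_translate_const L Mf = L * (Xts_perturb_const L * Mf + Xts_bound L) + Xts_bound L * Mf"

lemma hloc_translate_diff_le:
  fixes f :: "real \<Rightarrow> complex^'q"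
  assumes fc: "continuous_on UNIV f" and Mf: "\<And>u. norm (f u) \<le> Mf"
    and L: "0 \<le> L" "L \<le> Lm" "0 \<le> L'" "L' \<le> Lm"
    and thA: "\<And>u. norm (A u - A (u + c)) \<le> \<theta>" and thf: "\<And>u. norm (f u - f (u + c)) \<le> \<theta>"
    and dl: "\<bar>L - L'\<bar> \<le> \<delta>"
  shows "norm (hloc f a L - hloc f (a + c) L') \<le> hloc_translate_const Lm Mf * (\<theta> + \<delta>)"
proof -
  define M P w where "M = Xts_bound Lm" "P = Xts_perturb_const Lm" "w = \<theta> + \<delta>"
  have Lm: "Lm \<ge> 0" using L by linarith
  have Mf0: "Mf \<ge> 0" and \<theta>: "0 \<le> \<theta>" "\<theta> \<le> w" and \<delta>: "\<bar>L - L'\<bar> \<le> w"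
    using order_trans[OF norm_ge_zero Mf] order_trans[OF norm_ge_zero thA] dl unfolding M_P_w_def(3) by auto
  have M: "M > 0" "P \<ge> 0" unfolding M_P_w_def
    using Xts_bound_pos Xts_perturb_const_nonneg[OF Lm] by auto
  define k1 where "k1 v = Xts X (a + L) v *v f v" for v
  define k2 where "k2 v = Xts X (a + c + L') (v + c) *v f (v + c)" for v
  have ck1: "continuous_on S k1" for S
    unfolding k1_def by (intro continuous_intros continuous_on_Xts_snd continuous_on_subset[OF fc]) simp
  have ck2: "continuous_on S k2" for S
    unfolding k2_def by (intro continuous_intros continuous_on_compose2[OF continuous_on_Xts_snd[of UNIV]]
        continuous_on_compose2[OF fc]) auto
  have eqh: "hloc f a L = integral {a..a+L} k1" unfolding hloc_def k1_def ..
  have eqh': "hloc f (a + c) L' = integral {a..a+L'} k2"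
    using integral_translate[where h = "\<lambda>u. Xts X (a + c + L') u *v f u" and y = a and u = "a + L'" and c = c]
    unfolding hloc_def k2_def by (simp add: ac_simps)
  have k_bound: "norm (k2 v) \<le> M * Mf" if "v \<in> {a..a+Lm}" for v
  proof -
    have "norm (Xts X (a + c + L') (v + c)) \<le> M"
      unfolding M_P_w_def using that L by (intro norm_Xts_le) auto
    then show ?thesis unfolding k2_def
      using norm_matrix_vector_mult_le Mf Mf0 by (meson mult_mono norm_ge_zero order_trans)
  qed
  have k_diff: "norm (k1 v - k2 v) \<le> (P * Mf + M) * w" if v: "v \<in> {a..a+L}" for v
  proof -
    have "norm (k1 v - k2 v) \<le> norm (Xts X (a + L) v - Xts X (a + c + L') (v + c)) * norm (f v)
        + norm (Xts X (a + c + L') (v + c)) * norm (f v - f (v + c))"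
      unfolding k1_def k2_def by (rule norm_matrix_vector_mult_diff_le)
    also have "\<dots> \<le> (P * w) * Mf + M * \<theta>"
    proof (intro add_mono mult_mono)
      show "norm (Xts X (a + L) v - Xts X (a + c + L') (v + c)) \<le> P * w"
        unfolding M_P_w_def by (rule Xts_perturb_le[OF thA]) (use v L dl in auto)
      show "norm (Xts X (a + c + L') (v + c)) \<le> M"
        unfolding M_P_w_def by (rule norm_Xts_le) (use v L in auto)
    qed (use Mf thf \<theta> M in auto)
    also have "\<dots> \<le> (P * Mf + M) * w"
      using \<theta> M Mf0 by (simp add: algebra_simps mult_left_mono)
    finally show ?thesis .
  qed
  have "norm (hloc f a L - hloc f (a + c) L') \<le> (P * Mf + M) * w * L + M * Mf * \<bar>L - L'\<bar>"
    unfolding eqh eqh' by (rule norm_integral_diff_le[OF ck1 ck2 k_diff k_bound L])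
  also have "\<dots> \<le> (P * Mf + M) * w * Lm + M * Mf * w"
    using L \<delta> \<theta> M Mf0 by (intro add_mono mult_left_mono) auto
  finally show ?thesis unfolding hloc_translate_const_def M_P_w_def by (simp add: algebra_simps)
qed

lemma norm_hloc_le:
  fixes f :: "real \<Rightarrow> complex^'q"
  assumes fc: "continuous_on UNIV f" and Mf: "\<And>u. norm (f u) \<le> Mf" and L: "0 \<le> L" "L \<le> Lm"
  shows "norm (hloc f a L) \<le> Xts_bound Lm * Mf * L"
proof -
  have fcs: "continuous_on S f" for S using fc continuous_on_subset by blast
  have "norm (hloc f a L) \<le> Xts_bound Lm * Mf * ((a + L) - a)"
    unfolding hloc_def
  proof (rule norm_integral_le_length)
    show "continuous_on {a..a + L} (\<lambda>u. Xts X (a + L) u *v f u)" by (intro continuous_intros continuous_on_Xts_snd fcs)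
    fix v assume v: "v \<in> {a..a+L}"
    have "norm (Xts X (a + L) v *v f v) \<le> norm (Xts X (a + L) v) * norm (f v)" by (rule norm_matrix_vector_mult_le)
    also have "\<dots> \<le> Xts_bound Lm * Mf" using v L norm_Xts_le[of "a + L" v Lm] Mf[of v] Xts_bound_pos[of Lm] by (intro mult_mono) auto
    finally show "norm (Xts X (a + L) v *v f v) \<le> Xts_bound Lm * Mf" .
  qed (use L in auto)
  then show ?thesis by simp
qed

end

section \<open>Exponential dichotomy and the Green function\<close>

lemma has_sum_power_abs_int:
  fixes \<rho> :: real
  assumes r: "0 \<le> \<rho>" "\<rho> < 1"
  shows "((\<lambda>k::int. \<rho> ^ nat \<bar>k\<bar>) has_sum ((1 + \<rho>) / (1 - \<rho>))) UNIV"
proof -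
  have g: "(\<lambda>m. \<rho> ^ m) sums (1 / (1 - \<rho>))" by (rule geometric_sums) (use r in simp)
  have h0: "((\<lambda>m. \<rho> ^ m) has_sum (1 / (1 - \<rho>))) UNIV"
    by (rule sums_nonneg_imp_has_sum[OF g]) (use r in simp)
  have g1: "(\<lambda>m. \<rho> * \<rho> ^ m) sums (\<rho> * (1 / (1 - \<rho>)))" by (rule sums_mult[OF g])
  have h1: "((\<lambda>m. \<rho> * \<rho> ^ m) has_sum (\<rho> * (1 / (1 - \<rho>)))) UNIV"
    by (rule sums_nonneg_imp_has_sum[OF g1]) (use r in simp)
  have i0: "inj (int :: nat \<Rightarrow> int)" by (simp add: inj_on_def)
  have i1: "inj (\<lambda>m::nat. - int m - 1)" by (simp add: inj_on_def)
  have A: "((\<lambda>k::int. \<rho> ^ nat \<bar>k\<bar>) has_sum (1 / (1 - \<rho>))) (range int)"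
    unfolding has_sum_reindex[OF i0] o_def using h0 by simp
  have B: "((\<lambda>k::int. \<rho> ^ nat \<bar>k\<bar>) has_sum (\<rho> * (1 / (1 - \<rho>)))) (range (\<lambda>m::nat. - int m - 1))"
    unfolding has_sum_reindex[OF i1] o_def
  proof -
    have "\<rho> ^ nat \<bar>- int m - 1\<bar> = \<rho> * \<rho> ^ m" for m
    proof -
      have "nat \<bar>- int m - 1\<bar> = Suc m" by simp
      then show ?thesis by simp
    qed
    then show "((\<lambda>x. \<rho> ^ nat \<bar>- int x - 1\<bar>) has_sum \<rho> * (1 / (1 - \<rho>))) UNIV" using h1 by simp
  qed
  have U: "range int \<union> range (\<lambda>m::nat. - int m - 1) = (UNIV :: int set)"
  proof -
    have "k \<in> range int \<union> range (\<lambda>m::nat. - int m - 1)" for k :: int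
    proof (cases "k \<ge> 0")
      case True then show ?thesis by (metis UnI1 nonneg_int_cases rangeI)
    next
      case False then have "k = - int (nat (- k - 1)) - 1" by simp
      then show ?thesis by (metis UnI2 rangeI)
    qed
    then show ?thesis by blast
  qed
  have Dj: "range int \<inter> range (\<lambda>m::nat. - int m - 1) = {}" by auto
  from has_sum_Un_disjoint[OF A B Dj] have "((\<lambda>k::int. \<rho> ^ nat \<bar>k\<bar>) has_sum (1 / (1 - \<rho>) + \<rho> * (1 / (1 - \<rho>)))) UNIV"
    unfolding U .
  moreover have "1 / (1 - \<rho>) + \<rho> * (1 / (1 - \<rho>)) = (1 + \<rho>) / (1 - \<rho>)" by (simp add: add_divide_distrib)
  ultimately show ?thesis by simp
qed

lemma has_sum_power_abs_diff_int:
  fixes \<rho> :: real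
  assumes r: "0 \<le> \<rho>" "\<rho> < 1"
  shows "((\<lambda>k::int. \<rho> ^ nat \<bar>n - k\<bar>) has_sum ((1 + \<rho>) / (1 - \<rho>))) UNIV"
proof -
  have i: "inj (\<lambda>k::int. n - k)" by (simp add: inj_on_def)
  have s: "range (\<lambda>k::int. n - k) = UNIV" by (rule surjI[of _ "\<lambda>k. n - k"]) simp
  have "((\<lambda>k::int. \<rho> ^ nat \<bar>k\<bar>) has_sum ((1 + \<rho>) / (1 - \<rho>))) (range (\<lambda>k::int. n - k))"
    unfolding s by (rule has_sum_power_abs_int[OF r])
  then show ?thesis unfolding has_sum_reindex[OF i] o_def .
qed

lemma has_sum_delta:
  fixes v :: "'a::{comm_monoid_add,topological_space}"
  shows "((\<lambda>k. if k = n then v else 0) has_sum v) UNIV"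
proof -
  have "((\<lambda>k. if k = n then v else 0) has_sum v) {n}" using has_sum_finite[of "{n}" "\<lambda>k. if k = n then v else 0"] by simp
  then show ?thesis by (subst (asm) has_sum_cong_neutral[where T = UNIV]) auto
qed

locale exponential_dichotomy =
  fixes Hs :: "int \<Rightarrow> complex^'q^'q" and Phi :: "int \<Rightarrow> complex^'q^'q" and P :: "complex^'q^'q"
    and K \<rho> :: real
  assumes Phi_fund: "\<And>n. Phi (n + 1) = Hs n ** Phi n"
    and Phi_inv: "\<And>n. invertible (Phi n)"
    and K_pos: "K > 0" and rho: "0 < \<rho>" "\<rho> < 1"
    and G_bound: "\<And>n k. norm (Gmat Phi P n k) \<le> K * \<rho> ^ nat \<bar>n - k\<bar>"
begin

definition green_bound where "green_bound = K * ((1 + \<rho>) / (1 - \<rho>))"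

lemma green_bound_le: "green_bound \<le> 2 * K / (1 - \<rho>)"
proof -
  have "(1 + \<rho>) / (1 - \<rho>) \<le> 2 / (1 - \<rho>)" using rho by (intro divide_right_mono) auto
  then show ?thesis unfolding green_bound_def using K_pos by (simp add: mult_left_mono divide_simps)
qed

lemma green_bound_pos: "green_bound > 0" unfolding green_bound_def using K_pos rho by simp

lemma norm_green_term_le:
  assumes "\<And>k. norm (g k) \<le> Mg"
  shows "norm (Gmat Phi P n k *v g k) \<le> (K * Mg) * \<rho> ^ nat \<bar>n - k\<bar>"
proof -
  have "norm (Gmat Phi P n k *v g k) \<le> norm (Gmat Phi P n k) * norm (g k)"
    by (rule norm_matrix_vector_mult_le)
  also have "\<dots> \<le> (K * \<rho> ^ nat \<bar>n - k\<bar>) * Mg"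
    by (intro mult_mono G_bound assms) (use K_pos rho in auto)
  finally show ?thesis by (simp add: ac_simps)
qed

lemma green_majorant_has_sum:
  "((\<lambda>k. (K * Mg) * \<rho> ^ nat \<bar>n - k\<bar>) has_sum ((K * Mg) * ((1 + \<rho>) / (1 - \<rho>)))) UNIV"
  by (rule has_sum_cmult_right[OF has_sum_power_abs_diff_int[OF less_imp_le[OF rho(1)] rho(2)]])

lemma green_sum_has_sum:
  assumes "\<And>k. norm (g k) \<le> Mg"
  shows "((\<lambda>k. Gmat Phi P n k *v g k) has_sum (\<Sum>\<^sub>\<infinity>k. Gmat Phi P n k *v g k)) UNIV"
proof -
  have "(\<lambda>k. norm (Gmat Phi P n k *v g k)) summable_on UNIV"
    using green_majorant_has_sum norm_green_term_le[OF assms]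
    by (intro Infinite_Sum.abs_summable_on_comparison_test') (auto simp: summable_on_def)
  then show ?thesis
    by (simp add: abs_summable_summable summable_iff_has_sum_infsum[symmetric])
qed

lemma norm_green_sum_le:
  assumes "\<And>k. norm (g k) \<le> Mg"
  shows "norm (\<Sum>\<^sub>\<infinity>k. Gmat Phi P n k *v g k) \<le> green_bound * Mg"
  using norm_infsum_le[OF green_sum_has_sum[OF assms] green_majorant_has_sum norm_green_term_le[OF assms]]
  unfolding green_bound_def by (simp add: ac_simps)

lemma Phi_matrix_inv: "Phi n ** matrix_inv (Phi n) = mat 1" "matrix_inv (Phi n) ** Phi n = mat 1"
  using invertible_matrix_inv[OF Phi_inv] by auto

lemma Gmat_step: "Gmat Phi P (n + 1) k = Hs n ** Gmat Phi P n k + (if k = n then mat 1 else 0)"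
proof -
  consider "k < n" | "k = n" | "k > n" by linarith
  then show ?thesis
  proof cases
    case 1 then show ?thesis unfolding Gmat_def Phi_fund by (simp add: matrix_mul_assoc)
  next
    case 3 then show ?thesis unfolding Gmat_def Phi_fund
      by (simp add: matrix_mul_assoc bounded_bilinear.minus_right[OF bounded_bilinear_matrix_mult])
  next
    case 2
    have "Gmat Phi P (n + 1) n = Phi (n+1) ** P ** matrix_inv (Phi (n + 1))" unfolding Gmat_def by simp
    moreover have "Hs n ** Gmat Phi P n n = - (Phi (n+1) ** (mat 1 - P) ** matrix_inv (Phi (n + 1)))"
      unfolding Gmat_def Phi_fund by (simp add: matrix_mul_assoc bounded_bilinear.minus_right[OF bounded_bilinear_matrix_mult])
    moreover have "Phi (n+1) ** P ** matrix_inv (Phi (n + 1)) + Phi (n+1) ** (mat 1 - P) ** matrix_inv (Phi (n + 1)) = mat 1"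
    proof -
      have e: "Phi (n+1) ** P ** matrix_inv (Phi (n + 1)) + Phi (n+1) ** (mat 1 - P) ** matrix_inv (Phi (n + 1))
          = Phi (n+1) ** (P + (mat 1 - P)) ** matrix_inv (Phi (n + 1))"
        by (simp only: bounded_bilinear.add_left[OF bounded_bilinear_matrix_mult] bounded_bilinear.add_right[OF bounded_bilinear_matrix_mult])
      have "P + (mat 1 - P) = mat 1" by simp
      then show ?thesis using e Phi_matrix_inv by simp
    qed
    ultimately show ?thesis using 2 by (simp add: eq_diff_eq[symmetric])
  qed
qed

lemma green_sum_solves:
  assumes gb: "\<And>k. norm (g k) \<le> Mg"
  shows "(\<Sum>\<^sub>\<infinity>k. Gmat Phi P (n + 1) k *v g k) = Hs n *v (\<Sum>\<^sub>\<infinity>k. Gmat Phi P n k *v g k) + g n"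
proof -
  have bl: "bounded_linear (\<lambda>v. Hs n *v v)" by (rule bounded_bilinear.bounded_linear_right[OF bounded_bilinear_matrix_vector_mult])
  have h1: "((\<lambda>k. Hs n *v (Gmat Phi P n k *v g k)) has_sum (Hs n *v (\<Sum>\<^sub>\<infinity>k. Gmat Phi P n k *v g k))) UNIV"
    by (rule has_sum_bounded_linear[OF bl green_sum_has_sum[OF gb]])
  have h2: "((\<lambda>k. if k = n then g n else 0) has_sum g n) UNIV" by (rule has_sum_delta)
  have "((\<lambda>k. Hs n *v (Gmat Phi P n k *v g k) + (if k = n then g n else 0)) has_sum (Hs n *v (\<Sum>\<^sub>\<infinity>k. Gmat Phi P n k *v g k) + g n)) UNIV"
    by (rule has_sum_add[OF h1 h2])
  moreover have "Hs n *v (Gmat Phi P n k *v g k) + (if k = n then g n else 0) = Gmat Phi P (n + 1) k *v g k" for k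
    unfolding Gmat_step by (simp add: matrix_vector_mul_assoc bounded_bilinear.add_left[OF bounded_bilinear_matrix_vector_mult])
  ultimately have "((\<lambda>k. Gmat Phi P (n + 1) k *v g k) has_sum (Hs n *v (\<Sum>\<^sub>\<infinity>k. Gmat Phi P n k *v g k) + g n)) UNIV"
    by simp
  then show ?thesis by (simp add: infsumI)
qed

lemma Hs_eq_Phi: "Hs n = Phi (n + 1) ** matrix_inv (Phi n)"
  using Phi_matrix_inv[of n] by (simp add: Phi_fund matrix_mul_assoc[symmetric])

lemma Phi_mult_eq_0: "Phi n *v v = 0 \<Longrightarrow> v = 0"
  by (metis matrix_vector_mul_assoc matrix_vector_mul_lid matrix_vector_mult_0_right Phi_matrix_inv(2))

lemma Hs_mult_eq_0: "Hs n *v v = 0 \<Longrightarrow> v = 0"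
proof -
  assume "Hs n *v v = 0"
  then have "Phi (n + 1) *v (matrix_inv (Phi n) *v v) = 0" by (simp add: Hs_eq_Phi matrix_vector_mul_assoc)
  then have "matrix_inv (Phi n) *v v = 0" by (rule Phi_mult_eq_0)
  then have "Phi n *v (matrix_inv (Phi n) *v v) = 0" by simp
  then show "v = 0" by (simp add: matrix_vector_mul_assoc Phi_matrix_inv)
qed

lemma homogeneous_solution_eq_Phi:
  assumes hom: "\<And>n. x (n + 1) = Hs n *v x n"
  shows "x n = Phi n *v (matrix_inv (Phi 0) *v x 0)"
proof (induction n rule: int_induct[where k = 0])
  case base then show ?case by (simp add: matrix_vector_mul_assoc Phi_matrix_inv)
next
  case (step1 i) then show ?case by (simp add: hom Phi_fund matrix_vector_mul_assoc matrix_mul_assoc)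
next
  case (step2 i)
  have "Hs (i - 1) *v (x (i - 1) - Phi (i - 1) *v (matrix_inv (Phi 0) *v x 0)) = 0"
    using hom[of "i - 1"] step2(2) Phi_fund[of "i - 1"]
    by (simp add: matrix_vector_mult_diff_distrib matrix_vector_mul_assoc matrix_mul_assoc)
  then show ?case using Hs_mult_eq_0 by fastforce
qed

lemma norm_le_power_imp_zero:
  fixes v :: "'a::real_normed_vector"
  assumes "\<And>m::nat. norm v \<le> C * \<rho> ^ m"
  shows "v = 0"
proof -
  have "(\<lambda>m. C * \<rho> ^ m) \<longlonglongrightarrow> C * 0" using rho by (intro tendsto_intros) auto
  then have "norm v \<le> 0" using assms by (intro tendsto_le[OF _ _ tendsto_const]) (auto simp: eventually_sequentially)
  then show ?thesis by simp
qed

lemma bounded_homogeneous_solution_zero: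
  assumes hom: "\<And>n. x (n + 1) = Hs n *v x n" and xb: "\<And>n. norm (x n) \<le> Mx"
  shows "x n = 0"
proof -
  define u where "u = matrix_inv (Phi 0) *v x 0"
  have rep: "x n = Phi n *v u" for n unfolding u_def by (rule homogeneous_solution_eq_Phi[OF hom])
  have Mx0: "Mx \<ge> 0" using xb[of 0] norm_ge_zero order.trans by blast
  \<comment> \<open>G(0, m) x(m + 1) and G(0, -m - 1) x(-m) are the two components of u, up to the factor Phi 0,
    and they decay geometrically in m.\<close>
  have a: "Phi 0 *v ((mat 1 - P) *v u) = 0"
  proof (rule norm_le_power_imp_zero[where C = "K * Mx"])
    fix m :: nat
    have "Gmat Phi P 0 (int m) *v x (int m + 1) = - (Phi 0 *v ((mat 1 - P) *v u))"
      unfolding Gmat_def rep[of "int m + 1"]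
      by (simp add: matrix_vector_mul_assoc[symmetric] bounded_bilinear.minus_left[OF bounded_bilinear_matrix_vector_mult]) (simp add: matrix_vector_mul_assoc Phi_matrix_inv)
    then have "norm (Phi 0 *v ((mat 1 - P) *v u)) = norm (Gmat Phi P 0 (int m) *v x (int m + 1))" by simp
    also have "\<dots> \<le> norm (Gmat Phi P 0 (int m)) * norm (x (int m + 1))" by (rule norm_matrix_vector_mult_le)
    also have "\<dots> \<le> (K * \<rho> ^ m) * Mx" using G_bound[of 0 "int m"] xb[of "int m + 1"] K_pos rho
      by (intro mult_mono) auto
    finally show "norm (Phi 0 *v ((mat 1 - P) *v u)) \<le> K * Mx * \<rho> ^ m" by (simp add: ac_simps)
  qed
  have b: "Phi 0 *v (P *v u) = 0"
  proof (rule norm_le_power_imp_zero[where C = "K * Mx"])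
    fix m :: nat
    have "Gmat Phi P 0 (- int m - 1) *v x (- int m) = Phi 0 *v (P *v u)"
      unfolding Gmat_def rep[of "- int m"]
      by (simp add: matrix_vector_mul_assoc[symmetric]) (simp add: matrix_vector_mul_assoc Phi_matrix_inv)
    then have "norm (Phi 0 *v (P *v u)) = norm (Gmat Phi P 0 (- int m - 1) *v x (- int m))" by simp
    also have "\<dots> \<le> norm (Gmat Phi P 0 (- int m - 1)) * norm (x (- int m))" by (rule norm_matrix_vector_mult_le)
    also have "\<dots> \<le> (K * \<rho> ^ Suc m) * Mx" using G_bound[of 0 "- int m - 1"] xb[of "- int m"] K_pos rho
      by (intro mult_mono) (auto simp: nat_add_distrib)
    also have "\<dots> \<le> (K * \<rho> ^ m) * Mx" using K_pos rho Mx0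
      by (intro mult_right_mono mult_left_mono) (auto simp: power_Suc2 mult_left_le)
    finally show "norm (Phi 0 *v (P *v u)) \<le> K * Mx * \<rho> ^ m" by (simp add: ac_simps)
  qed
  have "(mat 1 - P) *v u = 0" using a Phi_mult_eq_0 by blast
  moreover have "P *v u = 0" using b Phi_mult_eq_0 by blast
  ultimately have "u = 0" by (simp add: matrix_vector_mult_diff_rdistrib)
  then show ?thesis using rep by simp
qed

lemma bounded_solution_eq_green_sum:
  assumes eq: "\<And>n. x (n + 1) = Hs n *v x n + g n" and xb: "\<And>n. norm (x n) \<le> Mx"
    and gb: "\<And>k. norm (g k) \<le> Mg"
  shows "x n = (\<Sum>\<^sub>\<infinity>k. Gmat Phi P n k *v g k)" and "norm (x n) \<le> green_bound * Mg"
proof -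
  define y where "y n = (\<Sum>\<^sub>\<infinity>k. Gmat Phi P n k *v g k)" for n
  have yb: "norm (y n) \<le> green_bound * Mg" for n unfolding y_def by (rule norm_green_sum_le[OF gb])
  have ys: "y (n + 1) = Hs n *v y n + g n" for n unfolding y_def by (rule green_sum_solves[OF gb])
  have "(\<lambda>n. x n - y n) n = 0"
  proof (rule bounded_homogeneous_solution_zero)
    fix n show "x (n + 1) - y (n + 1) = Hs n *v (x n - y n)"
      using eq[of n] ys[of n] by (simp add: matrix_vector_mult_diff_distrib)
    show "norm (x n - y n) \<le> Mx + green_bound * Mg" using xb[of n] yb[of n] norm_triangle_ineq4[of "x n" "y n"] by linarith
  qed
  then show "x n = (\<Sum>\<^sub>\<infinity>k. Gmat Phi P n k *v g k)" unfolding y_def by simp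
  then show "norm (x n) \<le> green_bound * Mg" using yb unfolding y_def by simp
qed

lemma almost_periodic_solution_eq_green_sum:
  assumes "almost_periodic_int x" and "\<And>n. x (n + 1) = Hs n *v x n + g n"
    and "\<And>k. norm (g k) \<le> Mg"
  shows "x = (\<lambda>n. \<Sum>\<^sub>\<infinity>k. Gmat Phi P n k *v g k)"
proof
  fix n
  obtain Mx where "\<And>n. norm (x n) \<le> Mx" using almost_periodic_int_bounded[OF assms(1)] by blast
  then show "x n = (\<Sum>\<^sub>\<infinity>k. Gmat Phi P n k *v g k)"
    using bounded_solution_eq_green_sum(1)[where g = g, OF assms(2) _ assms(3)] by blast
qed

lemma norm_green_sum_le_SUP:
  assumes bdd: "bdd_above (range (\<lambda>k. norm (g k)))"
  shows "norm (\<Sum>\<^sub>\<infinity>k. Gmat Phi P n k *v g k) \<le> 2 * K / (1 - \<rho>) * (SUP k. norm (g k))"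
proof -
  have g: "norm (g k) \<le> (SUP k. norm (g k))" for k by (rule cSUP_upper[OF UNIV_I bdd])
  have "norm (\<Sum>\<^sub>\<infinity>k. Gmat Phi P n k *v g k) \<le> green_bound * (SUP k. norm (g k))"
    using g by (rule norm_green_sum_le)
  also have "\<dots> \<le> 2 * K / (1 - \<rho>) * (SUP k. norm (g k))"
    using green_bound_le order_trans[OF norm_ge_zero g] by (rule mult_right_mono)
  finally show ?thesis .
qed

lemma green_sum_almost_periodic:
  assumes gb: "\<And>k. norm (g k) \<le> Mg"
    and net: "\<And>\<eta>. \<eta> > 0 \<Longrightarrow> \<exists>F. finite F \<and> (\<forall>m. \<exists>j\<in>F. \<forall>n.
        norm (Hs (n + m) - Hs (n + j)) \<le> \<eta> \<and> norm (g (n + m) - g (n + j)) \<le> \<eta>)"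
  shows "almost_periodic_int (\<lambda>n. \<Sum>\<^sub>\<infinity>k. Gmat Phi P n k *v g k)"
proof -
  define c where "c = (\<lambda>n. \<Sum>\<^sub>\<infinity>k. Gmat Phi P n k *v g k)"
  define Mc where "Mc = \<bar>green_bound * Mg\<bar>"
  have Mc0: "Mc \<ge> 0" unfolding Mc_def by simp
  have cb: "norm (c n) \<le> Mc" for n
    using norm_green_sum_le[where g = g and n = n, OF gb] unfolding c_def Mc_def by linarith
  have c_sol: "c (n + 1) = Hs n *v c n + g n" for n
    unfolding c_def by (rule green_sum_solves[OF gb])
  have "rel_dense_int {\<tau>. \<forall>n. norm (c (n + \<tau>) - c n) \<le> \<epsilon>}" if \<epsilon>: "\<epsilon> > 0" for \<epsilon>
  proof -
    define \<eta> where "\<eta> = \<epsilon> / (green_bound * (Mc + 1))"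
    have \<eta>: "\<eta> > 0" unfolding \<eta>_def using \<epsilon> green_bound_pos Mc0 by simp
    have "norm (c (n + T) - c n) \<le> \<epsilon>"
      if T: "\<forall>n. norm (Hs (n + T) - Hs n) \<le> \<eta> \<and> norm (g (n + T) - g n) \<le> \<eta>" for T n
    proof -
      define d where "d n = c (n + T) - c n" for n
      define r where "r n = (Hs (n + T) - Hs n) *v c (n + T) + (g (n + T) - g n)" for n
      have d_sol: "d (n + 1) = Hs n *v d n + r n" for n
        using c_sol[of "n + T"] c_sol[of n] unfolding d_def r_def
        by (simp add: ac_simps matrix_vector_mult_diff_rdistrib matrix_vector_mult_diff_distrib)
      have "norm (r k) \<le> \<eta> * Mc + \<eta>" for k
      proof -
        have "norm ((Hs (k + T) - Hs k) *v c (k + T)) \<le> \<eta> * Mc"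
          using norm_matrix_vector_mult_le[of "Hs (k + T) - Hs k" "c (k + T)"] T cb[of "k + T"]
          by (smt (verit, best) mult_mono norm_ge_zero)
        then show ?thesis
          using T norm_triangle_ineq[of "(Hs (k + T) - Hs k) *v c (k + T)" "g (k + T) - g k"]
          unfolding r_def by smt
      qed
      moreover have "norm (d n) \<le> Mc + Mc" for n
        using cb[of "n + T"] cb[of n] norm_triangle_ineq4 unfolding d_def by (smt (verit))
      ultimately have "norm (d n) \<le> green_bound * (\<eta> * Mc + \<eta>)"
        using bounded_solution_eq_green_sum(2)[OF d_sol] by blast
      also have "\<dots> = \<eta> * (green_bound * (Mc + 1))" by (simp add: algebra_simps)
      also have "\<dots> = \<epsilon>" unfolding \<eta>_def using green_bound_pos Mc0 by simp
      finally show ?thesis unfolding d_def .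
    qed
    moreover have "rel_dense_int {T. \<forall>n. norm (Hs (n + T) - Hs n) \<le> \<eta> \<and> norm (g (n + T) - g n) \<le> \<eta>}"
      using net \<eta> by (rule rel_dense_int_from_finite_net)
    ultimately show ?thesis by (auto elim!: rel_dense_int_mono)
  qed
  then show ?thesis unfolding almost_periodic_int_def c_def by blast
qed

end

section \<open>Translates of the discretised system\<close>

locale impulsive_system = impulse_times tt + ap_fundamental_matrix A X
  for tt :: "int \<Rightarrow> real" and A X :: "real \<Rightarrow> complex^'q^'q" +
  fixes B :: "real \<Rightarrow> complex^'q^'q" and f :: "real \<Rightarrow> complex^'q"
  assumes B_ap: "almost_periodic_real B" and f_H3: "H3 tt f"
begin

lemma f_ap: "almost_periodic_real f"
  by (rule H3_imp_almost_periodic[OF f_H3])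

lemma hvec_bounded:
  obtains Mh where "\<And>k. norm (hvec X f tt k) \<le> Mh"
proof -
  obtain Mf where Mf: "\<And>u. norm (f u) \<le> Mf" using almost_periodic_real_bounded[OF f_ap] by blast
  obtain Lmax where Lmax: "\<And>n. tt (n + 1) - tt n \<le> Lmax" using tt_gaps_bounded by blast
  have "norm (hvec X f tt k) \<le> Xts_bound Lmax * Mf * Lmax" for k
  proof -
    have gap: "0 \<le> tt (k + 1) - tt k" using tt_mono[of k] by simp
    have "norm (hvec X f tt k) \<le> Xts_bound Lmax * Mf * (tt (k + 1) - tt k)"
      unfolding hvec_eq_hloc
      by (rule norm_hloc_le[OF almost_periodic_real_continuous[OF f_ap] Mf gap Lmax])
    also have "\<dots> \<le> Xts_bound Lmax * Mf * Lmax"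
      using Xts_bound_pos[of Lmax] order_trans[OF norm_ge_zero Mf] Lmax[of k]
      by (intro mult_left_mono) auto
    finally show ?thesis .
  qed
  then show ?thesis by (rule that)
qed

lemma Hmat_hvec_translate_estimate:
  obtains C where "C > 0"
    "\<And>d e m j n. (\<And>n. \<bar>tt (n + m) - tt m - (tt (n + j) - tt j)\<bar> \<le> d) \<Longrightarrow>
      (\<And>x y. \<bar>x - y\<bar> \<le> d \<Longrightarrow> norm (A x - A y) \<le> e \<and> norm (B x - B y) \<le> e \<and> norm (f x - f y) \<le> e) \<Longrightarrow>
      (\<And>s. norm (A (s + tt m) - A (s + tt j)) \<le> e \<and> norm (B (s + tt m) - B (s + tt j)) \<le> e
          \<and> norm (f (s + tt m) - f (s + tt j)) \<le> e) \<Longrightarrow>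
      norm (Hmat X B tt (n + m) - Hmat X B tt (n + j)) \<le> C * (e + d)
      \<and> norm (hvec X f tt (n + m) - hvec X f tt (n + j)) \<le> C * (e + d)"
proof -
  obtain MB where MB: "\<And>u. norm (B u) \<le> MB" using almost_periodic_real_bounded[OF B_ap] by blast
  obtain Mf where Mf: "\<And>u. norm (f u) \<le> Mf" using almost_periodic_real_bounded[OF f_ap] by blast
  obtain Lmax where Lmax: "\<And>n. tt (n + 1) - tt n \<le> Lmax" using tt_gaps_bounded by blast
  define C where "C = 2 * (\<bar>Hloc_translate_const Lmax MB\<bar> + \<bar>hloc_translate_const Lmax Mf\<bar>) + 1"
  have "C > 0" unfolding C_def by simp
  moreover have "norm (Hmat X B tt (n + m) - Hmat X B tt (n + j)) \<le> C * (e + d)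
      \<and> norm (hvec X f tt (n + m) - hvec X f tt (n + j)) \<le> C * (e + d)"
    if incr: "\<And>n. \<bar>tt (n + m) - tt m - (tt (n + j) - tt j)\<bar> \<le> d"
      and unif: "\<And>x y. \<bar>x - y\<bar> \<le> d \<Longrightarrow> norm (A x - A y) \<le> e \<and> norm (B x - B y) \<le> e \<and> norm (f x - f y) \<le> e"
      and transl: "\<And>s. norm (A (s + tt m) - A (s + tt j)) \<le> e \<and> norm (B (s + tt m) - B (s + tt j)) \<le> e
          \<and> norm (f (s + tt m) - f (s + tt j)) \<le> e"
    for d e m j n
  proof -
    have ed: "0 \<le> e + d" using incr[of 0] unif[of 0 0] by (smt (verit) norm_ge_zero)
    \<comment> \<open>The shift by c maps the impulse interval of index n + m onto that of index n + j.\<close>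
    define a c L L' where "a = tt (n + m)" "c = tt (n + j) - tt (n + m)"
      "L = tt (n + m + 1) - tt (n + m)" "L' = tt (n + j + 1) - tt (n + j)"
    have close: "norm (A u - A (u + c)) \<le> e + e" "norm (B u - B (u + c)) \<le> e + e"
      "norm (f u - f (u + c)) \<le> e + e" for u
      unfolding a_c_L_L'_def(2) using incr[of n] unif transl
      by (blast intro: translate_close_by_increments)+
    have L: "0 \<le> L" "L \<le> Lmax" "0 \<le> L'" "L' \<le> Lmax"
      unfolding a_c_L_L'_def using tt_mono[of "n + m"] tt_mono[of "n + j"] Lmax[of "n + m"] Lmax[of "n + j"]
      by simp_all
    have dL: "\<bar>L - L'\<bar> \<le> d + d"
      using incr[of n] incr[of "n + 1"] unfolding a_c_L_L'_def by (simp add: ac_simps)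
    have eqs: "Hmat X B tt (n + m) = Hloc B a L" "Hmat X B tt (n + j) = Hloc B (a + c) L'"
      "hvec X f tt (n + m) = hloc f a L" "hvec X f tt (n + j) = hloc f (a + c) L'"
      unfolding Hmat_eq_Hloc hvec_eq_hloc a_c_L_L'_def by (simp_all add: add.assoc)
    have weight: "K * ((e + e) + (d + d)) \<le> C * (e + d)" if "2 * \<bar>K\<bar> \<le> C" for K
      using mult_right_mono[OF that ed] mult_right_mono[OF abs_ge_self[of K], of "2 * (e + d)"] ed
      by (simp add: algebra_simps)
    have "2 * \<bar>Hloc_translate_const Lmax MB\<bar> \<le> C" "2 * \<bar>hloc_translate_const Lmax Mf\<bar> \<le> C"
      unfolding C_def by auto
    then have "norm (Hloc B a L - Hloc B (a + c) L') \<le> C * (e + d)"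
      and "norm (hloc f a L - hloc f (a + c) L') \<le> C * (e + d)"
      using Hloc_translate_diff_le[OF almost_periodic_real_continuous[OF B_ap] MB L close(1,2) dL, of a]
        hloc_translate_diff_le[OF almost_periodic_real_continuous[OF f_ap] Mf L close(1,3) dL, of a]
      by (auto dest!: weight)
    then show ?thesis unfolding eqs by blast
  qed
  ultimately show ?thesis by (rule that)
qed

lemma translation_finite_net:
  assumes d: "d > 0" and e: "e > 0"
  shows "\<exists>F. finite F \<and> (\<forall>m. \<exists>j\<in>F. (\<forall>n. \<bar>tt (n + m) - tt m - (tt (n + j) - tt j)\<bar> \<le> d)
    \<and> (\<forall>s. norm (A (s + tt m) - A (s + tt j)) \<le> e \<and> norm (B (s + tt m) - B (s + tt j)) \<le> e
        \<and> norm (f (s + tt m) - f (s + tt j)) \<le> e))"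
proof -
  obtain F1 where F1: "finite F1" "\<And>m. \<exists>j\<in>F1. \<forall>n. \<bar>tt (n + m) - tt m - (tt (n + j) - tt j)\<bar> \<le> d/2"
    using increments_finite_net[of "d/2"] d by auto
  obtain FA where FA: "finite FA" "\<And>r. \<exists>j\<in>FA. \<forall>s. norm (A (s + r) - A (s + j)) \<le> e/2"
    using almost_periodic_real_translates_finite_net[OF A_ap, of "e/2"] e by auto
  obtain FB where FB: "finite FB" "\<And>r. \<exists>j\<in>FB. \<forall>s. norm (B (s + r) - B (s + j)) \<le> e/2"
    using almost_periodic_real_translates_finite_net[OF B_ap, of "e/2"] e by auto
  obtain Ff where Ff: "finite Ff" "\<And>r. \<exists>j\<in>Ff. \<forall>s. norm (f (s + r) - f (s + j)) \<le> e/2"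
    using almost_periodic_real_translates_finite_net[OF f_ap, of "e/2"] e by auto
  define R1 where "R1 m y \<longleftrightarrow> (\<forall>n. \<bar>tt (n + m) - tt m - (tt (n + y) - tt y)\<bar> \<le> d/2)" for m y
  define R2 where "R2 m y \<longleftrightarrow> (\<forall>s. norm (A (s + tt m) - A (s + fst y)) \<le> e/2)
      \<and> (\<forall>s. norm (B (s + tt m) - B (s + fst (snd y))) \<le> e/2)
      \<and> (\<forall>s. norm (f (s + tt m) - f (s + snd (snd y))) \<le> e/2)" for m y
  have r1: "\<exists>y\<in>F1. R1 m y" for m unfolding R1_def using F1(2) by blast
  have r2: "\<exists>y\<in>FA \<times> FB \<times> Ff. R2 m y" for m
  proof -
    obtain ya where "ya \<in> FA" "\<forall>s. norm (A (s + tt m) - A (s + ya)) \<le> e/2" using FA(2) by blast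
    moreover obtain yb where "yb \<in> FB" "\<forall>s. norm (B (s + tt m) - B (s + yb)) \<le> e/2" using FB(2) by blast
    moreover obtain yf where "yf \<in> Ff" "\<forall>s. norm (f (s + tt m) - f (s + yf)) \<le> e/2" using Ff(2) by blast
    ultimately show ?thesis unfolding R2_def by (intro bexI[of _ "(ya, yb, yf)"]) auto
  qed
  have "finite (FA \<times> FB \<times> Ff)" using FA(1) FB(1) Ff(1) by simp
  from finite_nets_common_refinement[where P = R1 and Q = R2, OF F1(1) r1 this r2]
  obtain F where F: "finite F" "\<forall>m. \<exists>j\<in>F. \<exists>y1 y2. R1 m y1 \<and> R1 j y1 \<and> R2 m y2 \<and> R2 j y2"
    by (elim exE conjE)
  have "\<exists>j\<in>F. (\<forall>n. \<bar>tt (n + m) - tt m - (tt (n + j) - tt j)\<bar> \<le> d)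
    \<and> (\<forall>s. norm (A (s + tt m) - A (s + tt j)) \<le> e \<and> norm (B (s + tt m) - B (s + tt j)) \<le> e
        \<and> norm (f (s + tt m) - f (s + tt j)) \<le> e)" for m
  proof -
    obtain j y1 y2 where "j \<in> F" and R: "R1 m y1" "R1 j y1" "R2 m y2" "R2 j y2" using F(2) by blast
    have "norm (A (s + tt m) - A (s + tt j)) \<le> e \<and> norm (B (s + tt m) - B (s + tt j)) \<le> e
        \<and> norm (f (s + tt m) - f (s + tt j)) \<le> e" for s
      using R(3,4) unfolding R2_def by (blast intro: norm_diff_le_via_centre)
    moreover have "\<bar>tt (n + m) - tt m - (tt (n + j) - tt j)\<bar> \<le> d" for n
      using R(1,2) unfolding R1_def by (smt (verit) field_sum_of_halves)
    ultimately show ?thesis using \<open>j \<in> F\<close> R(3,4) unfolding R2_def by blast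
  qed
  with F(1) show ?thesis by blast
qed

lemma Hmat_hvec_finite_net:
  assumes "\<eta> > 0"
  shows "\<exists>F. finite F \<and> (\<forall>m. \<exists>j\<in>F. \<forall>n. norm (Hmat X B tt (n + m) - Hmat X B tt (n + j)) \<le> \<eta>
    \<and> norm (hvec X f tt (n + m) - hvec X f tt (n + j)) \<le> \<eta>)"
proof -
  obtain C where C: "C > 0" and estimate: "\<And>d e m j n. (\<And>n. \<bar>tt (n + m) - tt m - (tt (n + j) - tt j)\<bar> \<le> d) \<Longrightarrow>
      (\<And>x y. \<bar>x - y\<bar> \<le> d \<Longrightarrow> norm (A x - A y) \<le> e \<and> norm (B x - B y) \<le> e \<and> norm (f x - f y) \<le> e) \<Longrightarrow>
      (\<And>s. norm (A (s + tt m) - A (s + tt j)) \<le> e \<and> norm (B (s + tt m) - B (s + tt j)) \<le> e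
          \<and> norm (f (s + tt m) - f (s + tt j)) \<le> e) \<Longrightarrow>
      norm (Hmat X B tt (n + m) - Hmat X B tt (n + j)) \<le> C * (e + d)
      \<and> norm (hvec X f tt (n + m) - hvec X f tt (n + j)) \<le> C * (e + d)"
    by (rule Hmat_hvec_translate_estimate) blast
  define e where "e = \<eta> / (2 * C)"
  have e: "e > 0" unfolding e_def using assms C by simp
  obtain dA where dA: "dA > 0" "\<And>x y. \<bar>x - y\<bar> \<le> dA \<Longrightarrow> norm (A x - A y) \<le> e"
    using almost_periodic_real_uniformly_continuous[OF A_ap e] by blast
  obtain dB where dB: "dB > 0" "\<And>x y. \<bar>x - y\<bar> \<le> dB \<Longrightarrow> norm (B x - B y) \<le> e"
    using almost_periodic_real_uniformly_continuous[OF B_ap e] by blast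
  obtain df where df: "df > 0" "\<And>x y. \<bar>x - y\<bar> \<le> df \<Longrightarrow> norm (f x - f y) \<le> e"
    using almost_periodic_real_uniformly_continuous[OF f_ap e] by blast
  define d where "d = min e (min dA (min dB df))"
  have d: "d > 0" and Ced: "C * (e + d) \<le> \<eta>"
    using e dA dB df C mult_left_mono[of d e C] unfolding d_def e_def by (auto simp: field_simps)
  have unif: "norm (A x - A y) \<le> e \<and> norm (B x - B y) \<le> e \<and> norm (f x - f y) \<le> e"
    if "\<bar>x - y\<bar> \<le> d" for x y
    using that dA(2) dB(2) df(2) unfolding d_def by auto
  obtain F where "finite F" and F: "\<forall>m. \<exists>j\<in>F. (\<forall>n. \<bar>tt (n + m) - tt m - (tt (n + j) - tt j)\<bar> \<le> d)
    \<and> (\<forall>s. norm (A (s + tt m) - A (s + tt j)) \<le> e \<and> norm (B (s + tt m) - B (s + tt j)) \<le> e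
        \<and> norm (f (s + tt m) - f (s + tt j)) \<le> e)"
    using translation_finite_net[OF d e] by blast
  have "\<exists>j\<in>F. \<forall>n. norm (Hmat X B tt (n + m) - Hmat X B tt (n + j)) \<le> \<eta>
    \<and> norm (hvec X f tt (n + m) - hvec X f tt (n + j)) \<le> \<eta>" for m
  proof -
    obtain j where "j \<in> F" and j: "\<forall>n. \<bar>tt (n + m) - tt m - (tt (n + j) - tt j)\<bar> \<le> d"
      "\<forall>s. norm (A (s + tt m) - A (s + tt j)) \<le> e \<and> norm (B (s + tt m) - B (s + tt j)) \<le> e
        \<and> norm (f (s + tt m) - f (s + tt j)) \<le> e"
      using F by blast
    have "norm (Hmat X B tt (n + m) - Hmat X B tt (n + j)) \<le> C * (e + d)
      \<and> norm (hvec X f tt (n + m) - hvec X f tt (n + j)) \<le> C * (e + d)" for n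
      using j by (intro estimate[OF _ unif]) auto
    with \<open>j \<in> F\<close> Ced show ?thesis by (meson order_trans)
  qed
  with \<open>finite F\<close> show ?thesis by blast
qed

end

theorem theorem1:
  fixes A B :: "real \<Rightarrow> complex^'q^'q"
    and f :: "real \<Rightarrow> complex^'q"
    and X :: "real \<Rightarrow> complex^'q^'q"
    and tt :: "int \<Rightarrow> real"
    and Phi :: "int \<Rightarrow> complex^'q^'q"
    and P :: "complex^'q^'q"
    and K \<rho> :: real
  assumes tt_mono: "\<And>n. tt n < tt (n + 1)"
    and tt_top: "filterlim tt at_top at_top"
    and tt_bot: "filterlim tt at_bot at_bot"
    and A_li: "\<And>a b. A absolutely_integrable_on {a..b}"
    and B_li: "\<And>a b. B absolutely_integrable_on {a..b}"
    and f_li: "\<And>a b. f absolutely_integrable_on {a..b}"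
    and X_fund: "fundamental_matrix A X"
    and J_inv: "\<And>n s. s \<in> {tt n..tt (n + 1)} \<Longrightarrow> invertible (Jmat X B tt n s)"
    and H1: "almost_periodic_real A" "almost_periodic_real B"
    and H3: "H3 tt f"
    and Phi_fund: "\<And>n. Phi (n + 1) = Hmat X B tt n ** Phi n"
    and Phi_inv: "\<And>n. invertible (Phi n)"
    and P_proj: "P ** P = P"
    and K_pos: "K > 0" and rho: "0 < \<rho>" "\<rho> < 1"
    and G_bound: "\<And>n k. norm (Gmat Phi P n k) \<le> K * \<rho> ^ nat \<bar>n - k\<bar>"
  defines "c \<equiv> (\<lambda>n. \<Sum>\<^sub>\<infinity>k. Gmat Phi P n k *v hvec X f tt k)"
  shows "almost_periodic_int c
     \<and> (\<forall>n. c (n + 1) = Hmat X B tt n *v c n + hvec X f tt n)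
     \<and> (\<forall>c'. almost_periodic_int c' \<and> (\<forall>n. c' (n + 1) = Hmat X B tt n *v c' n + hvec X f tt n)
             \<longrightarrow> c' = c)
     \<and> bdd_above (range (\<lambda>k. norm (hvec X f tt k)))
     \<and> (\<forall>n. norm (c n) \<le> 2 * K / (1 - \<rho>) * (SUP k. norm (hvec X f tt k)))"
proof -
  have "H2 tt" using H3 unfolding H3_def by simp
  interpret impulsive_system tt A X B f
    using tt_mono tt_top tt_bot \<open>H2 tt\<close> X_fund H1 H3 by unfold_locales
  interpret exponential_dichotomy "Hmat X B tt" Phi P K \<rho>
    using Phi_fund Phi_inv K_pos rho G_bound by unfold_locales
  obtain Mh where hb: "\<And>k. norm (hvec X f tt k) \<le> Mh" using hvec_bounded by blast
  have bdd: "bdd_above (range (\<lambda>k. norm (hvec X f tt k)))"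
    using hb by (intro bdd_aboveI2)
  have "\<forall>n. c (n + 1) = Hmat X B tt n *v c n + hvec X f tt n"
    unfolding c_def using green_sum_solves[where g = "hvec X f tt", OF hb] by blast
  moreover have "almost_periodic_int c"
    unfolding c_def by (rule green_sum_almost_periodic[where g = "hvec X f tt", OF hb Hmat_hvec_finite_net])
  moreover have "\<forall>c'. almost_periodic_int c' \<and> (\<forall>n. c' (n + 1) = Hmat X B tt n *v c' n + hvec X f tt n)
      \<longrightarrow> c' = c"
    unfolding c_def using almost_periodic_solution_eq_green_sum[where g = "hvec X f tt", OF _ _ hb] by blast
  moreover have "\<forall>n. norm (c n) \<le> 2 * K / (1 - \<rho>) * (SUP k. norm (hvec X f tt k))"
    unfolding c_def using norm_green_sum_le_SUP[OF bdd] by blast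
  ultimately show ?thesis using bdd by blast
qed

end
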